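(* Let $\Phi\subset N_\mathbb{R}$ be a compact convex domain with non-empty interior, let $\mathcal{F}_\Phi$ be its tropical distance series, $t_\Phi=\max_\Phi \mathcal{F}_\Phi$ its final time, and $\mathcal{K}_\Phi$ its tropical caustic. Let $p$ be a vertex of $\mathcal{K}_\Phi$ which is non-final, i.e. $0<\mathcal{F}_\Phi(p)<t_\Phi$. Then $p$ is a trivalent vertex of $\mathcal{K}_\Phi$, and there exist a natural number $n\geq 1$ and a lattice basis $e_1,e_2$ of $N$ such that, in a small neighbourhood of $p$, $\mathcal{K}_\Phi$ is the union of exactly three segments emanating from $p$: \begin{itemize} \item one in the primitive direction $e_2$, of weight $n$, \item one in the primitive direction $-e_1-n e_2$, of weight $1$, \item one in the primitive direction $e_1$, of weight $1$; \end{itemize} moreover $\mathcal{F}_\Phi<\mathcal{F}_\Phi(p)$ on the first two segments (other than at $p$) and $\mathcal{F}_\Phi>\mathcal{F}_\Phi(p)$ on the third one. In the language of the particle process: a non-final collision involves exactly two particles, one of mass $n\ge 1$ and one of mass $1$, and produces a single particle of mass $1$ (so at most one of the colliding particles has mass greater than one). Equivalently, the dual polygon of $p$ (the convex hull of the gradients of $\mathcal{F}_\Phi$ on the regions adjacent to $p$) is, up to translation and lattice automorphism of $M$, the triangle with vertices $(0,0),(0,1),(-n,1)$, an $A_n$-type triangle of area $n/2$.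
   Context: $N$ is a rank-two lattice, $N_\mathbb{R}=N\otimes\mathbb{R}$, and $M=\operatorname{Hom}(N,\mathbb{Z})$ is the dual lattice. For a compact convex domain $\Phi\subset N_\mathbb{R}$, the tropical distance series is $\mathcal{F}_\Phi(x)=\min_{\lambda\in M\setminus\{0\}}\big(\lambda(x)-\min_{q\in\Phi}\lambda(q)\big)$ for $x\in\Phi$, i.e. the minimum of all support functions of $\Phi$ with integral gradient; it is non-negative on $\Phi$ and vanishes on $\partial\Phi$. The tropical propagation of $\Phi$ at time $t\ge0$ is $\Phi(t)=\{x\in\Phi:\mathcal{F}_\Phi(x)\geq t\}$ (equivalently, the intersection of all rational-slope support half-planes $\{\lambda\ge c\}$ of $\Phi$, $\lambda\in M$ primitive, shifted to $\{\lambda\ge c+t\}$), and the tropical wave front is $\partial\Phi(t)=\mathcal{F}_\Phi^{-1}(t)$; the final time $t_\Phi$ is the maximal $t$ with $\Phi(t)\neq\emptyset$. The tropical caustic $\mathcal{K}_\Phi$ is the corner locus of $\mathcal{F}_\Phi$ in the interior of $\Phi$: the set of points where the minimum defining $\mathcal{F}_\Phi$ is attained by at least two distinct gradients (equivalently, the locus of vertices, i.e. special points, of the wave fronts $\partial\Phi(t)$, $t>0$, together with $\Phi(t_\Phi)$ when the latter is a segment). It is a graph with straight rational-slope edges; the weight of an edge is the lattice length of the difference of the two gradients of $\mathcal{F}_\Phi$ on either side of it, and the edges are balanced at every interior vertex. A vertex of $\mathcal{K}_\Phi$ is a point of $\mathcal{K}_\Phi$ near which $\mathcal{K}_\Phi$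 is not a single straight segment. Particle process: vertices of the wave front $\partial\Phi(t)$ are viewed as particles moving along edges of $\mathcal{K}_\Phi$ as $t$ increases, with mass equal to the edge weight and primitive velocity; at a collision momentum (mass times primitive velocity) is conserved. *)

theory Defs
  imports "HOL-Analysis.Analysis"
begin

text \<open>N = Z^2 inside N_R = real x real; M = Z^2 with the standard pairing.\<close>

definition vec :: "int \<times> int \<Rightarrow> real \<times> real" where
  "vec d = (real_of_int (fst d), real_of_int (snd d))"

definition pairing :: "int \<times> int \<Rightarrow> real \<times> real \<Rightarrow> real" where
  "pairing l x = real_of_int (fst l) * fst x + real_of_int (snd l) * snd x"

definition supp :: "(real \<times> real) set \<Rightarrow> int \<times> int \<Rightarrow> real" where
  "supp \<Phi> l = Inf (pairing l ` \<Phi>)"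

definition tdist :: "(real \<times> real) set \<Rightarrow> real \<times> real \<Rightarrow> real" where
  "tdist \<Phi> x = Inf {pairing l x - supp \<Phi> l | l. l \<noteq> (0, 0)}"

definition final_time :: "(real \<times> real) set \<Rightarrow> real" where
  "final_time \<Phi> = Sup (tdist \<Phi> ` \<Phi>)"

definition attains :: "(real \<times> real) set \<Rightarrow> real \<times> real \<Rightarrow> int \<times> int \<Rightarrow> bool" where
  "attains \<Phi> x l \<longleftrightarrow> l \<noteq> (0, 0) \<and> pairing l x - supp \<Phi> l = tdist \<Phi> x"

definition caustic :: "(real \<times> real) set \<Rightarrow> (real \<times> real) set" where
  "caustic \<Phi> = {x \<in> interior \<Phi>. \<exists>l1 l2. l1 \<noteq> l2 \<and> attains \<Phi> x l1 \<and> attains \<Phi> x l2}"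

definition caustic_vertex :: "(real \<times> real) set \<Rightarrow> real \<times> real \<Rightarrow> bool" where
  "caustic_vertex \<Phi> p \<longleftrightarrow> p \<in> caustic \<Phi> \<and>
     \<not> (\<exists>\<epsilon>>0. \<exists>d::real \<times> real. d \<noteq> 0 \<and>
            caustic \<Phi> \<inter> ball p \<epsilon> = {p + s *\<^sub>R d | s. True} \<inter> ball p \<epsilon>)"

definition diff_len :: "int \<times> int \<Rightarrow> int \<times> int \<Rightarrow> int" where
  "diff_len l l' = gcd (fst l - fst l') (snd l - snd l')"

definition lattice_basis :: "int \<times> int \<Rightarrow> int \<times> int \<Rightarrow> bool" where
  "lattice_basis e1 e2 \<longleftrightarrow> \<bar>fst e1 * snd e2 - snd e1 * fst e2\<bar> = 1"

text \<open>x lies on an edge of the caustic of weight w: near x, tdist is the minimum of two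
  affine functions with distinct integral gradients l, l' (the gradients on either side),
  and w is the lattice length of l - l'.\<close>
definition edge_weight :: "(real \<times> real) set \<Rightarrow> real \<times> real \<Rightarrow> int \<Rightarrow> bool" where
  "edge_weight \<Phi> x w \<longleftrightarrow> (\<exists>l l'. l \<noteq> l' \<and> diff_len l l' = w \<and>
      (\<exists>\<delta>>0. \<forall>y\<in>ball x \<delta>.
         tdist \<Phi> y = tdist \<Phi> x + min (pairing l (y - x)) (pairing l' (y - x))))"

end

theory Submission
  imports Defs
begin

text \<open>
  Near an interior point \<open>p\<close> of \<open>\<Phi>\<close>, the tropical distance is \<open>F(p + w) = F(p) + min {\<langle>l, w\<rangle> | l \<in> S}\<close>
  for small \<open>w\<close>, where \<open>S\<close> is the finite set of gradients active at \<open>p\<close>; so near \<open>p\<close> the caustic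
  is the locus where this minimum of linear forms is attained twice.
  The function \<open>g(l) = \<langle>l, p\<rangle> - min\<^sub>\<Phi> l\<close> is sublinear on \<open>M\<close> and attains its minimum \<open>F(p)\<close> over
  \<open>M - {0}\<close> exactly on \<open>S\<close>; hence a relation \<open>k z = i a + j b\<close> with \<open>a, b \<in> S\<close> and \<open>k \<ge> 1\<close> forces
  \<open>k \<le> i + j\<close>, with equality only if \<open>z \<in> S\<close>. Since \<open>p\<close> is not final, a point deeper than \<open>p\<close>
  yields a direction \<open>v\<close> with \<open>\<langle>s, v\<rangle> > 0\<close> for all \<open>s \<in> S\<close>.
  These constraints leave two shapes for \<open>S\<close>: consecutive lattice points on a line, in which case
  the caustic near \<open>p\<close> is a straight line and \<open>p\<close> is no vertex; or, for some \<open>\<delta>, \<beta>\<close> with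
  \<open>det(\<delta>, \<beta>) = \<plusminus>1\<close>, the set \<open>{-\<delta>} \<union> {\<beta> + j \<delta> | 0 \<le> j \<le> n}\<close> (an \<open>A\<^sub>n\<close> triangle), whose
  tie locus consists of the three rays of the theorem.
\<close>

definition ipair :: "int \<times> int \<Rightarrow> int \<times> int \<Rightarrow> int" where
  "ipair l d = fst l * fst d + snd l * snd d"

definition det2 :: "int \<times> int \<Rightarrow> int \<times> int \<Rightarrow> int" where
  "det2 u w = fst u * snd w - snd u * fst w"

definition smul :: "int \<Rightarrow> int \<times> int \<Rightarrow> int \<times> int" where
  "smul k l = (k * fst l, k * snd l)"

definition lincomb :: "int \<times> int \<Rightarrow> int \<times> int \<Rightarrow> int \<Rightarrow> int \<Rightarrow> int \<times> int" where
  "lincomb a b x y = (x * fst a + y * fst b, x * snd a + y * snd b)"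

lemma smul_0 [simp]: "smul 0 l = (0, 0)"
  and smul_1 [simp]: "smul 1 l = l"
  by (simp_all add: smul_def)

lemma add_Pair_zero_right [simp]: "x + (0, 0) = (x :: int \<times> int)"
  by (simp add: prod_eq_iff)

lemma pairing_add_left: "pairing (l + l') x = pairing l x + pairing l' x"
  by (simp add: pairing_def algebra_simps)

lemma pairing_smul: "pairing (smul k l) x = of_int k * pairing l x"
  by (simp add: pairing_def smul_def algebra_simps)

lemma pairing_add_smul: "pairing (b + smul k l) x = pairing b x + of_int k * pairing l x"
  by (simp add: pairing_add_left pairing_smul)

lemma pairing_uminus_right: "pairing l (- x) = - pairing l x"
  by (simp add: pairing_def)

lemma pairing_add_right: "pairing l (x + y) = pairing l x + pairing l y"
  by (simp add: pairing_def algebra_simps)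

lemma pairing_diff_right: "pairing l (x - y) = pairing l x - pairing l y"
  by (simp add: pairing_def algebra_simps)

lemma pairing_scaleR_vec: "pairing l (s *\<^sub>R vec d) = s * of_int (ipair l d)"
  by (simp add: pairing_def vec_def ipair_def algebra_simps)

lemma ipair_smul_left: "ipair (smul k l) d = k * ipair l d"
  by (simp add: ipair_def smul_def algebra_simps)

lemma pairing_zero_left [simp]: "pairing (0, 0) x = 0"
  by (simp add: pairing_def)

lemma abs_pairing_le: "\<bar>pairing l x\<bar> \<le> norm (vec l) * norm x"
proof -
  have "pairing l x = vec l \<bullet> x"
    by (simp add: pairing_def vec_def inner_prod_def)
  then show ?thesis by (simp add: Cauchy_Schwarz_ineq2)
qed

lemma abs_fst_le_norm_vec: "\<bar>real_of_int (fst l)\<bar> \<le> norm (vec l)"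
  and abs_snd_le_norm_vec: "\<bar>real_of_int (snd l)\<bar> \<le> norm (vec l)"
  by (simp_all add: vec_def norm_Pair real_le_rsqrt)

lemma finite_norm_vec_less: "finite {l. norm (vec l) < K}"
proof (rule finite_subset)
  show "{l. norm (vec l) < K} \<subseteq> {-\<lceil>K\<rceil>..\<lceil>K\<rceil>} \<times> {-\<lceil>K\<rceil>..\<lceil>K\<rceil>}"
  proof
    fix l assume "l \<in> {l. norm (vec l) < K}"
    then have "\<bar>real_of_int (fst l)\<bar> < K" "\<bar>real_of_int (snd l)\<bar> < K"
      using abs_fst_le_norm_vec[of l] abs_snd_le_norm_vec[of l] by auto
    then have "\<bar>fst l\<bar> \<le> \<lceil>K\<rceil>" "\<bar>snd l\<bar> \<le> \<lceil>K\<rceil>"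
      by (metis ceiling_mono ceiling_of_int less_imp_le of_int_abs)+
    then show "l \<in> {-\<lceil>K\<rceil>..\<lceil>K\<rceil>} \<times> {-\<lceil>K\<rceil>..\<lceil>K\<rceil>}"
      by (cases l) (simp add: abs_le_iff)
  qed
qed simp

lemma continuous_on_pairing: "continuous_on A (pairing l)"
  unfolding pairing_def by (intro continuous_intros)

lemma lincomb_1_0 [simp]: "lincomb a b 1 0 = a"
  and lincomb_0_1 [simp]: "lincomb a b 0 1 = b"
  by (simp_all add: lincomb_def)

lemma det2_lincomb: "det2 (lincomb a b x y) (lincomb a b x' y') = (x * y' - y * x') * det2 a b"
  by (simp add: lincomb_def det2_def algebra_simps)

lemma lincomb_coords:
  assumes "det2 a b = 1"
  shows "s = lincomb a b (- det2 b s) (det2 a s)"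
proof -
  have "lincomb a b (- det2 b s) (det2 a s) = smul (det2 a b) s"
    by (simp add: lincomb_def smul_def det2_def prod_eq_iff algebra_simps)
  with assms show ?thesis
    by simp
qed

lemma lincomb_eq_iff:
  assumes "det2 a b = 1"
  shows "lincomb a b x y = lincomb a b x' y' \<longleftrightarrow> x = x' \<and> y = y'"
proof
  assume eq: "lincomb a b x y = lincomb a b x' y'"
  have "det2 a (lincomb a b x y) = y" "det2 b (lincomb a b x y) = - x"
    "det2 a (lincomb a b x' y') = y'" "det2 b (lincomb a b x' y') = - x'"
    using assms by (simp_all add: lincomb_def det2_def algebra_simps)
  with eq show "x = x' \<and> y = y'"
    by simp
qed simp

lemma smul_det2_cramer: "smul (det2 a w) x = smul (det2 x w) a + smul (det2 a x) w"
  by (simp add: smul_def det2_def prod_eq_iff algebra_simps)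

lemma eq_if_pairings_eq:
  assumes "det2 d b \<noteq> 0" "pairing d w = pairing d w'" "pairing b w = pairing b w'"
  shows "w = w'"
proof -
  define x where "x = fst w - fst w'"
  define y where "y = snd w - snd w'"
  have e: "of_int (fst d) * x + of_int (snd d) * y = 0" "of_int (fst b) * x + of_int (snd b) * y = 0"
    using assms(2,3) by (simp_all add: x_def y_def pairing_def algebra_simps)
  have "of_int (det2 d b) * x = of_int (snd b) * (of_int (fst d) * x + of_int (snd d) * y)
      - of_int (snd d) * (of_int (fst b) * x + of_int (snd b) * y)"
    by (simp add: det2_def algebra_simps)
  also have "\<dots> = 0"
    by (simp only: e mult_zero_right diff_self)
  finally have "x = 0"
    using assms(1) by simp
  have "of_int (det2 d b) * y = of_int (fst d) * (of_int (fst b) * x + of_int (snd b) * y)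
      - of_int (fst b) * (of_int (fst d) * x + of_int (snd d) * y)"
    by (simp add: det2_def algebra_simps)
  also have "\<dots> = 0"
    by (simp only: e mult_zero_right diff_self)
  finally have "y = 0"
    using assms(1) by simp
  with \<open>x = 0\<close> show ?thesis
    by (simp add: x_def y_def prod_eq_iff)
qed

lemma gcd_eq_1_if_det2_unit:
  assumes "\<bar>det2 x y\<bar> = 1"
  shows "gcd (fst x) (snd x) = 1"
proof -
  have "gcd (fst x) (snd x) dvd det2 x y"
    by (simp add: det2_def)
  with assms show ?thesis
    by (metis dvd_abs_iff gcd_ge_0_int gcd_unique_int is_unit_gcd_iff zdvd1_eq)
qed

section \<open>The tropical distance near an interior point\<close>

definition gap :: "(real \<times> real) set \<Rightarrow> real \<times> real \<Rightarrow> int \<times> int \<Rightarrow> real" where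
  "gap \<Phi> x l = pairing l x - supp \<Phi> l"

definition argmins :: "('a \<Rightarrow> real) \<Rightarrow> 'a set \<Rightarrow> 'a set" where
  "argmins f A = {a \<in> A. \<forall>b\<in>A. f a \<le> f b}"

abbreviation lowest :: "(int \<times> int) set \<Rightarrow> real \<times> real \<Rightarrow> (int \<times> int) set" where
  "lowest S w \<equiv> argmins (\<lambda>l. pairing l w) S"

lemma argmins_nonempty:
  assumes "finite A" "A \<noteq> {}"
  shows "argmins f A \<noteq> {}"
proof -
  have "Min (f ` A) \<in> f ` A"
    using assms by simp
  then obtain a where "a \<in> A" "f a = Min (f ` A)"
    by auto
  then show ?thesis
    using assms by (auto simp: argmins_def)
qed

lemma supp_attained:
  assumes "compact \<Phi>" "\<Phi> \<noteq> {}"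
  obtains q where "q \<in> \<Phi>" "supp \<Phi> l = pairing l q"
proof -
  obtain q where q: "q \<in> \<Phi>" "\<forall>q'\<in>\<Phi>. pairing l q \<le> pairing l q'"
    using continuous_attains_inf[OF assms continuous_on_pairing] by blast
  then have "supp \<Phi> l = pairing l q"
    unfolding supp_def by (intro cInf_eq_minimum) auto
  with q that show thesis by blast
qed

lemma supp_le_pairing:
  assumes "compact \<Phi>" "q \<in> \<Phi>"
  shows "supp \<Phi> l \<le> pairing l q"
proof -
  have "compact (pairing l ` \<Phi>)"
    by (rule compact_continuous_image[OF continuous_on_pairing assms(1)])
  then have "bdd_below (pairing l ` \<Phi>)"
    by (simp add: bounded_imp_bdd_below compact_imp_bounded)
  then show ?thesis
    unfolding supp_def using assms(2) by (auto intro: cInf_lower)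
qed

lemma gap_shift: "gap \<Phi> y l = gap \<Phi> x l + pairing l (y - x)"
  by (simp add: gap_def pairing_diff_right)

lemma gap_ge_norm:
  assumes "compact \<Phi>" "cball x r \<subseteq> \<Phi>" "r \<ge> 0"
  shows "r * norm (vec l) \<le> gap \<Phi> x l"
proof (cases "vec l = 0")
  case True
  have "x \<in> \<Phi>" using assms by auto
  then show ?thesis using True supp_le_pairing[OF assms(1)] by (simp add: gap_def)
next
  case False
  define q where "q = x - (r / norm (vec l)) *\<^sub>R vec l"
  have "dist x q = r" using False assms(3) by (simp add: q_def dist_norm)
  then have "supp \<Phi> l \<le> pairing l q"
    using assms(1,2) by (intro supp_le_pairing) auto
  also have "pairing l q = pairing l x - (r / norm (vec l)) * (vec l \<bullet> vec l)"
    by (simp add: q_def pairing_def vec_def inner_prod_def algebra_simps)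
  also have "(r / norm (vec l)) * (vec l \<bullet> vec l) = r * norm (vec l)"
    using False by (simp add: power2_norm_eq_inner[symmetric] power2_eq_square)
  finally show ?thesis by (simp add: gap_def)
qed

text \<open>\<^term>\<open>gap \<Phi> x\<close> is the support function of \<^term>\<open>\<Phi>\<close> shifted by a linear form, hence sublinear.\<close>

lemma gap_add_le:
  assumes "compact \<Phi>" "\<Phi> \<noteq> {}"
  shows "gap \<Phi> x (a + b) \<le> gap \<Phi> x a + gap \<Phi> x b"
proof -
  obtain q where q: "q \<in> \<Phi>" "supp \<Phi> (a + b) = pairing (a + b) q"
    using supp_attained[OF assms] .
  moreover have "supp \<Phi> a \<le> pairing a q" "supp \<Phi> b \<le> pairing b q"
    using supp_le_pairing[OF assms(1) q(1)] by auto
  ultimately show ?thesis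
    unfolding gap_def pairing_add_left by linarith
qed

lemma gap_smul_ge:
  assumes "compact \<Phi>" "\<Phi> \<noteq> {}" "k \<ge> 0"
  shows "of_int k * gap \<Phi> x l \<le> gap \<Phi> x (smul k l)"
proof -
  obtain q where q: "q \<in> \<Phi>" "supp \<Phi> l = pairing l q"
    using supp_attained[OF assms(1,2)] .
  have "supp \<Phi> (smul k l) \<le> of_int k * supp \<Phi> l"
    using supp_le_pairing[OF assms(1) q(1), of "smul k l"] q(2) by (simp add: pairing_smul)
  then show ?thesis
    by (simp add: gap_def pairing_smul algebra_simps)
qed

lemma gap_zero:
  assumes "compact \<Phi>" "\<Phi> \<noteq> {}"
  shows "gap \<Phi> x (0, 0) = 0"
  using supp_attained[OF assms, of "(0, 0)"] by (metis diff_self gap_def pairing_zero_left)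

lemma tdist_le_gap:
  assumes "compact \<Phi>" "x \<in> \<Phi>" "l \<noteq> (0, 0)"
  shows "tdist \<Phi> x \<le> gap \<Phi> x l"
proof -
  have "bdd_below {gap \<Phi> x l | l. l \<noteq> (0, 0)}"
    using supp_le_pairing[OF assms(1,2)] by (intro bdd_belowI[of _ 0]) (auto simp: gap_def)
  moreover have "gap \<Phi> x l \<in> {gap \<Phi> x l | l. l \<noteq> (0, 0)}"
    using assms(3) by blast
  ultimately show ?thesis
    unfolding tdist_def gap_def[symmetric] by (rule cInf_lower[rotated])
qed

lemma attains_iff_gap: "attains \<Phi> x l \<longleftrightarrow> l \<noteq> (0, 0) \<and> gap \<Phi> x l = tdist \<Phi> x"
  by (simp add: attains_def gap_def)

lemma tdist_eq_gap_argmin: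
  assumes "compact \<Phi>" "x \<in> \<Phi>" "finite F" "(0, 0) \<notin> F" "l0 \<in> F"
    and outside: "\<And>l. l \<noteq> (0, 0) \<Longrightarrow> l \<notin> F \<Longrightarrow> gap \<Phi> x l0 < gap \<Phi> x l"
    and l: "l \<in> argmins (gap \<Phi> x) F"
  shows "tdist \<Phi> x = gap \<Phi> x l"
  unfolding tdist_def gap_def[symmetric]
proof (rule cInf_eq_minimum)
  show "gap \<Phi> x l \<in> {gap \<Phi> x l' | l'. l' \<noteq> (0, 0)}"
    using l assms(4) unfolding argmins_def by blast
  fix t assume "t \<in> {gap \<Phi> x l' | l'. l' \<noteq> (0, 0)}"
  then obtain l' where "t = gap \<Phi> x l'" "l' \<noteq> (0, 0)" by blast
  with l assms(5) outside[of l'] show "gap \<Phi> x l \<le> t"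
    by (cases "l' \<in> F") (auto simp: argmins_def)
qed

lemma attains_iff_argmins_gap:
  assumes "compact \<Phi>" "x \<in> \<Phi>" "finite F" "(0, 0) \<notin> F" "l0 \<in> F"
    and outside: "\<And>l. l \<noteq> (0, 0) \<Longrightarrow> l \<notin> F \<Longrightarrow> gap \<Phi> x l0 < gap \<Phi> x l"
  shows "attains \<Phi> x l \<longleftrightarrow> l \<in> argmins (gap \<Phi> x) F"
proof -
  obtain l1 where l1: "l1 \<in> argmins (gap \<Phi> x) F"
    using argmins_nonempty[OF assms(3)] assms(5) by blast
  have td: "tdist \<Phi> x = gap \<Phi> x l1"
    by (rule tdist_eq_gap_argmin[OF assms l1])
  show ?thesis
  proof
    assume "attains \<Phi> x l"
    then have l: "l \<noteq> (0, 0)" "gap \<Phi> x l = gap \<Phi> x l1"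
      by (auto simp: attains_iff_gap td)
    have "l \<in> F"
      using l outside[of l] l1 assms(5) by (force simp: argmins_def)
    with l l1 show "l \<in> argmins (gap \<Phi> x) F"
      by (simp add: argmins_def)
  next
    assume l: "l \<in> argmins (gap \<Phi> x) F"
    then show "attains \<Phi> x l"
      using tdist_eq_gap_argmin[OF assms l] assms(4) by (auto simp: attains_iff_gap argmins_def)
  qed
qed

text \<open>Only finitely many gradients can compete for the minimum uniformly near an interior point,
  because \<^term>\<open>gap \<Phi> y l\<close> grows linearly in the length of \<^term>\<open>l\<close>.\<close>

lemma gap_large_off_finite_set:
  assumes "compact \<Phi>" "r > 0" "cball p r \<subseteq> \<Phi>"
  obtains F where "finite F" "(0, 0) \<notin> F" "(1, 0) \<in> F"
    "\<And>y l. y \<in> ball p (r / 2) \<Longrightarrow> l \<noteq> (0, 0) \<Longrightarrow> l \<notin> F \<Longrightarrow> gap \<Phi> y (1, 0) < gap \<Phi> y l"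
proof
  define c where "c = gap \<Phi> p (1, 0)"
  define K where "K = 2 * c / r + 2"
  define F where "F = {l. norm (vec l) < K} - {(0, 0)}"
  show "finite F" "(0, 0) \<notin> F"
    using finite_norm_vec_less[of K] by (simp_all add: F_def)
  have "0 \<le> r * norm (vec (1, 0))"
    using assms(2) by simp
  then have "0 \<le> c"
    using gap_ge_norm[OF assms(1,3), of "(1, 0)"] assms(2) unfolding c_def by linarith
  then have "0 \<le> 2 * c / r"
    using assms(2) by simp
  then show "(1, 0) \<in> F"
    by (simp add: F_def K_def vec_def)
  fix y l
  assume y: "y \<in> ball p (r / 2)" and l: "l \<noteq> (0, 0)" "l \<notin> F"
  have "cball y (r / 2) \<subseteq> cball p r"
    using y by (subst cball_subset_cball_iff) (auto simp: dist_commute)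
  then have "cball y (r / 2) \<subseteq> \<Phi>"
    using assms(3) by blast
  then have "r / 2 * norm (vec l) \<le> gap \<Phi> y l"
    using assms(1,2) by (intro gap_ge_norm) auto
  moreover have "K \<le> norm (vec l)"
    using l by (simp add: F_def)
  then have "r / 2 * K \<le> r / 2 * norm (vec l)"
    using assms(2) by simp
  moreover have "r / 2 * K = c + r"
    using assms(2) by (simp add: K_def field_simps)
  moreover have "gap \<Phi> y (1, 0) < c + r / 2"
  proof -
    have "\<bar>pairing (1, 0) (y - p)\<bar> \<le> norm (y - p)"
      using abs_pairing_le[of "(1, 0)" "y - p"] by (simp add: vec_def)
    moreover have "norm (y - p) < r / 2"
      using y by (simp add: dist_norm norm_minus_commute)
    ultimately show ?thesis
      using gap_shift[of \<Phi> y "(1, 0)" p] unfolding c_def by linarith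
  qed
  ultimately show "gap \<Phi> y (1, 0) < gap \<Phi> y l"
    using assms(2) by linarith
qed

lemma argmins_add_dominated:
  fixes c e :: "'a \<Rightarrow> real"
  assumes SF: "S \<subseteq> F" and "S \<noteq> {}" and cS: "\<And>s. s \<in> S \<Longrightarrow> c s = T"
    and beats: "\<And>s l. s \<in> S \<Longrightarrow> l \<in> F - S \<Longrightarrow> c s + e s < c l + e l"
  shows "argmins (\<lambda>l. c l + e l) F = argmins e S"
proof (intro set_eqI iffI)
  fix l
  assume "l \<in> argmins (\<lambda>l. c l + e l) F"
  then have l: "l \<in> F" "\<And>b. b \<in> F \<Longrightarrow> c l + e l \<le> c b + e b"
    by (auto simp: argmins_def)
  obtain s where s: "s \<in> S"
    using \<open>S \<noteq> {}\<close> by blast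
  have lS: "l \<in> S"
  proof (rule ccontr)
    assume "l \<notin> S"
    with beats s l(1) have "c s + e s < c l + e l"
      by blast
    with l(2)[of s] s SF show False
      by auto
  qed
  moreover have "e l \<le> e b" if "b \<in> S" for b
    using l(2)[of b] that SF cS[of b] cS[OF lS] by auto
  ultimately show "l \<in> argmins e S"
    by (simp add: argmins_def)
next
  fix l
  assume "l \<in> argmins e S"
  then have lS: "l \<in> S" and l: "\<And>b. b \<in> S \<Longrightarrow> e l \<le> e b"
    by (auto simp: argmins_def)
  have "c l + e l \<le> c b + e b" if "b \<in> F" for b
  proof (cases "b \<in> S")
    case True
    then show ?thesis
      using l cS lS by auto
  next
    case False
    then show ?thesis
      using beats[OF lS, of b] that by simp
  qed
  then show "l \<in> argmins (\<lambda>l. c l + e l) F"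
    using lS SF by (auto simp: argmins_def)
qed

lemma finite_uniform_gap:
  fixes f :: "'a \<Rightarrow> real"
  assumes "finite A" "\<And>a. a \<in> A \<Longrightarrow> T < f a"
  obtains \<eta> where "\<eta> > 0" "\<And>a. a \<in> A \<Longrightarrow> T + \<eta> \<le> f a"
proof
  define \<eta> where "\<eta> = Min (insert 1 ((\<lambda>a. f a - T) ` A))"
  show "\<eta> > 0"
    using assms by (simp add: \<eta>_def)
  show "T + \<eta> \<le> f a" if "a \<in> A" for a
  proof -
    have "\<eta> \<le> f a - T"
      unfolding \<eta>_def using assms(1) that by (intro Min_le) auto
    then show ?thesis
      by simp
  qed
qed

lemma argmins_affine_near_zero:
  fixes c :: "int \<times> int \<Rightarrow> real"
  assumes "finite F" "F \<noteq> {}"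
  obtains \<epsilon> where "\<epsilon> > 0"
    "\<And>w. norm w < \<epsilon> \<Longrightarrow> argmins (\<lambda>l. c l + pairing l w) F = lowest (argmins c F) w"
proof -
  define S where "S = argmins c F"
  define T where "T = Min (c ` F)"
  have cS: "c s = T" if "s \<in> S" for s
    using that assms by (auto simp: S_def T_def argmins_def intro!: antisym Min_le Min.boundedI)
  have S_ne: "S \<noteq> {}"
    unfolding S_def by (rule argmins_nonempty[OF assms])
  have SF: "S \<subseteq> F"
    by (auto simp: S_def argmins_def)
  have above: "T < c l" if "l \<in> F - S" for l
  proof -
    have "T \<le> c l"
      using that assms unfolding T_def by simp
    moreover obtain s where "s \<in> S"
      using S_ne by blast
    ultimately show ?thesis
      using that cS[of s] by (fastforce simp: S_def argmins_def)
  qed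
  obtain \<eta> where \<eta>: "\<eta> > 0" and \<eta>_le: "\<And>l. l \<in> F - S \<Longrightarrow> T + \<eta> \<le> c l"
    using finite_uniform_gap[of "F - S" T c] assms(1) above by blast
  define C where "C = Max (insert 1 ((\<lambda>l. norm (vec l)) ` F))"
  have "1 \<le> C"
    unfolding C_def using assms(1) by (intro Max_ge) auto
  moreover have "norm (vec l) \<le> C" if "l \<in> F" for l
    unfolding C_def using assms(1) that by (intro Max_ge) auto
  ultimately have C: "C > 0" "\<And>l. l \<in> F \<Longrightarrow> norm (vec l) \<le> C"
    by auto
  show thesis
  proof
    show "\<eta> / (2 * C) > 0"
      using \<eta> C by simp
    fix w :: "real \<times> real"
    assume w: "norm w < \<eta> / (2 * C)"
    have small: "\<bar>pairing l w\<bar> < \<eta> / 2" if "l \<in> F" for l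
    proof -
      have "\<bar>pairing l w\<bar> \<le> C * norm w"
        using abs_pairing_le[of l w] C(2)[OF that] by (meson mult_right_mono norm_ge_zero order_trans)
      also have "\<dots> < \<eta> / 2"
        using w C(1) by (simp add: field_simps)
      finally show ?thesis .
    qed
    have beats: "c s + pairing s w < c l + pairing l w" if "s \<in> S" "l \<in> F - S" for s l
      using small[of s] small[of l] that SF cS[of s] \<eta>_le[of l] by auto
    have "argmins (\<lambda>l. c l + pairing l w) F = lowest S w"
      using argmins_add_dominated[OF SF S_ne cS beats] .
    then show "argmins (\<lambda>l. c l + pairing l w) F = lowest (argmins c F) w"
      by (simp add: S_def)
  qed
qed

locale tdist_chart =
  fixes \<Phi> :: "(real \<times> real) set" and p :: "real \<times> real" and \<epsilon> :: real
    and S :: "(int \<times> int) set"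
  assumes eps_pos: "\<epsilon> > 0"
    and finite_S: "finite S"
    and ball_subset_interior: "ball p \<epsilon> \<subseteq> interior \<Phi>"
    and attains_near: "\<And>y l. y \<in> ball p \<epsilon> \<Longrightarrow> attains \<Phi> y l \<longleftrightarrow> l \<in> lowest S (y - p)"
    and tdist_near: "\<And>y l. y \<in> ball p \<epsilon> \<Longrightarrow> l \<in> lowest S (y - p) \<Longrightarrow>
      tdist \<Phi> y = tdist \<Phi> p + pairing l (y - p)"

lemma attains_near_interior_point:
  assumes "compact \<Phi>" "p \<in> interior \<Phi>"
  obtains \<rho> F where "\<rho> > 0" "ball p \<rho> \<subseteq> interior \<Phi>" "finite F"
    "\<And>y l. y \<in> ball p \<rho> \<Longrightarrow> attains \<Phi> y l \<longleftrightarrow> l \<in> argmins (gap \<Phi> y) F"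
    "\<And>w. norm w < \<rho> \<Longrightarrow> argmins (\<lambda>l. gap \<Phi> p l + pairing l w) F = lowest (argmins (gap \<Phi> p) F) w"
proof -
  obtain r where r: "r > 0" "cball p r \<subseteq> interior \<Phi>"
    using assms(2) open_contains_cball open_interior by blast
  then have r\<Phi>: "cball p r \<subseteq> \<Phi>"
    using interior_subset by blast
  obtain F where F: "finite F" "(0, 0) \<notin> F" "(1, 0) \<in> F"
    and far: "\<And>y l. y \<in> ball p (r / 2) \<Longrightarrow> l \<noteq> (0, 0) \<Longrightarrow> l \<notin> F \<Longrightarrow> gap \<Phi> y (1, 0) < gap \<Phi> y l"
    using gap_large_off_finite_set[OF assms(1) r(1) r\<Phi>] by blast
  obtain \<epsilon> where \<epsilon>: "\<epsilon> > 0"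
    and affine: "\<And>w. norm w < \<epsilon> \<Longrightarrow> argmins (\<lambda>l. gap \<Phi> p l + pairing l w) F = lowest (argmins (gap \<Phi> p) F) w"
    using argmins_affine_near_zero[OF F(1)] F(3) by blast
  define \<rho> where "\<rho> = min (r / 2) \<epsilon>"
  have ball_\<rho>: "ball p \<rho> \<subseteq> ball p (r / 2)" "ball p \<rho> \<subseteq> interior \<Phi>"
    using r by (auto simp: \<rho>_def)
  have "attains \<Phi> y l \<longleftrightarrow> l \<in> argmins (gap \<Phi> y) F" if "y \<in> ball p \<rho>" for y l
  proof (rule attains_iff_argmins_gap[OF assms(1) _ F])
    show "y \<in> \<Phi>"
      using that ball_\<rho>(2) interior_subset by blast
  qed (use that ball_\<rho>(1) far in blast)
  with that[of \<rho> F] show thesis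
    using r(1) \<epsilon> ball_\<rho>(2) F(1) affine by (simp add: \<rho>_def)
qed

lemma tdist_chart_at_interior_point:
  assumes "compact \<Phi>" "p \<in> interior \<Phi>"
  obtains \<epsilon> where "tdist_chart \<Phi> p \<epsilon> {l. l \<noteq> (0, 0) \<and> gap \<Phi> p l = tdist \<Phi> p}"
proof -
  obtain \<rho> F where \<rho>: "\<rho> > 0" "ball p \<rho> \<subseteq> interior \<Phi>" and "finite F"
    and attains: "\<And>y l. y \<in> ball p \<rho> \<Longrightarrow> attains \<Phi> y l \<longleftrightarrow> l \<in> argmins (gap \<Phi> y) F"
    and affine: "\<And>w. norm w < \<rho> \<Longrightarrow> argmins (\<lambda>l. gap \<Phi> p l + pairing l w) F = lowest (argmins (gap \<Phi> p) F) w"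
    using attains_near_interior_point[OF assms] by blast
  define S where "S = {l. l \<noteq> (0, 0) \<and> gap \<Phi> p l = tdist \<Phi> p}"
  have S_eq: "S = argmins (gap \<Phi> p) F"
    using attains[of p] \<rho>(1) by (auto simp: S_def attains_iff_gap)
  have near: "attains \<Phi> y l \<longleftrightarrow> l \<in> lowest S (y - p)" if "y \<in> ball p \<rho>" for y l
  proof -
    have "norm (y - p) < \<rho>"
      using that by (simp add: dist_norm norm_minus_commute)
    moreover have "gap \<Phi> y = (\<lambda>l. gap \<Phi> p l + pairing l (y - p))"
      using gap_shift by blast
    ultimately show ?thesis
      unfolding attains[OF that] S_eq using affine by presburger
  qed
  have "tdist_chart \<Phi> p \<rho> S"
  proof
    show "finite S"
      unfolding S_eq using \<open>finite F\<close> by (auto simp: argmins_def)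
    show "tdist \<Phi> y = tdist \<Phi> p + pairing l (y - p)" if "y \<in> ball p \<rho>" "l \<in> lowest S (y - p)" for y l
    proof -
      have "gap \<Phi> p l = tdist \<Phi> p"
        using that(2) by (simp add: argmins_def S_def)
      moreover have "attains \<Phi> y l"
        using near[OF that(1)] that(2) by blast
      ultimately show ?thesis
        using gap_shift[of \<Phi> y l p] by (simp add: attains_iff_gap)
    qed
  qed (use \<rho> near in simp_all)
  then show thesis
    using that unfolding S_def by blast
qed

text \<open>A sufficient condition for the minimum of the forms in \<^term>\<open>S\<close> to agree, near \<^term>\<open>w\<close>,
  with the minimum of just \<^term>\<open>l\<close> and \<^term>\<open>l'\<close>: forms not tied at \<^term>\<open>w\<close> stay irrelevant
  nearby, and tied forms must dominate the minimum of the two.\<close>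

definition edge_pair :: "(int \<times> int) set \<Rightarrow> real \<times> real \<Rightarrow> int \<times> int \<Rightarrow> int \<times> int \<Rightarrow> bool" where
  "edge_pair S w l l' \<longleftrightarrow> l \<in> lowest S w \<and> l' \<in> lowest S w \<and>
     (\<forall>t\<in>lowest S w. \<forall>u. min (pairing l u) (pairing l' u) \<le> pairing t u)"

lemma min_of_edge_pair_in_lowest:
  assumes "edge_pair S w l l'"
  shows "(if pairing l u \<le> pairing l' u then l else l') \<in> lowest (lowest S w) u"
proof -
  have "min (pairing l u) (pairing l' u) \<le> pairing t u" if "t \<in> lowest S w" for t
    using assms that unfolding edge_pair_def by blast
  moreover have "l \<in> lowest S w" "l' \<in> lowest S w"
    using assms by (simp_all add: edge_pair_def)
  ultimately show ?thesis
    by (auto simp: argmins_def)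
qed

context tdist_chart
begin

lemma caustic_iff_tie:
  assumes "y \<in> ball p \<epsilon>"
  shows "y \<in> caustic \<Phi> \<longleftrightarrow> (\<exists>l l'. l \<noteq> l' \<and> l \<in> lowest S (y - p) \<and> l' \<in> lowest S (y - p))"
  using assms ball_subset_interior attains_near[OF assms] unfolding caustic_def by blast

lemma edge_weight_at:
  assumes y: "y \<in> ball p \<epsilon>" and "l \<noteq> l'" and edge: "edge_pair S (y - p) l l'"
  shows "edge_weight \<Phi> y (diff_len l l')"
proof -
  define w where "w = y - p"
  have l: "l \<in> lowest S w" "l' \<in> lowest S w"
    using edge by (simp_all add: edge_pair_def w_def)
  then have "S \<noteq> {}"
    by (auto simp: argmins_def)
  then obtain \<delta> where \<delta>: "\<delta> > 0"
    and near0: "\<And>u. norm u < \<delta> \<Longrightarrow> argmins (\<lambda>s. pairing s w + pairing s u) S = lowest (lowest S w) u"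
    using argmins_affine_near_zero[OF finite_S, of "\<lambda>s. pairing s w"] by blast
  have near: "lowest S (w + u) = lowest (lowest S w) u" if "norm u < \<delta>" for u
    using near0[OF that] by (simp add: pairing_add_right)
  define \<rho> where "\<rho> = min \<delta> (\<epsilon> - dist p y)"
  have "tdist \<Phi> z = tdist \<Phi> y + min (pairing l (z - y)) (pairing l' (z - y))" if z: "z \<in> ball y \<rho>" for z
  proof -
    define u where "u = z - y"
    define m where "m = (if pairing l u \<le> pairing l' u then l else l')"
    have "z \<in> ball p \<epsilon>"
      using z dist_triangle[of p z y] by (simp add: \<rho>_def dist_commute)
    moreover have "m \<in> lowest S (w + u)"
    proof -
      have "norm u < \<delta>"
        using z by (simp add: \<rho>_def u_def dist_norm norm_minus_commute)
      with near min_of_edge_pair_in_lowest[OF edge[folded w_def]] show ?thesis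
        unfolding m_def by blast
    qed
    moreover have "w + u = z - p"
      by (simp add: w_def u_def)
    ultimately have "tdist \<Phi> z = tdist \<Phi> p + pairing m (w + u)"
      using tdist_near by simp
    moreover have "tdist \<Phi> y = tdist \<Phi> p + pairing l w"
      using tdist_near[OF y] l(1) by (simp add: w_def)
    moreover have "pairing m w = pairing l w"
      using l by (force simp: m_def argmins_def)
    ultimately show ?thesis
      by (simp add: pairing_add_right m_def u_def)
  qed
  moreover have "\<rho> > 0"
    using \<delta> y by (simp add: \<rho>_def)
  ultimately show ?thesis
    unfolding edge_weight_def using \<open>l \<noteq> l'\<close> by blast
qed

lemma edge_on_ray:
  assumes "p + s *\<^sub>R vec d \<in> ball p \<epsilon>" "l \<noteq> l'" "edge_pair S (s *\<^sub>R vec d) l l'"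
  shows "edge_weight \<Phi> (p + s *\<^sub>R vec d) (diff_len l l')"
    and "tdist \<Phi> (p + s *\<^sub>R vec d) = tdist \<Phi> p + s * of_int (ipair l d)"
  using edge_weight_at[OF assms(1,2)] tdist_near[OF assms(1)] assms(3)
  by (simp_all add: edge_pair_def pairing_scaleR_vec)

end

section \<open>A collinear set of active gradients gives no vertex\<close>

definition lattice_segment :: "(int \<times> int) set \<Rightarrow> bool" where
  "lattice_segment S \<longleftrightarrow>
     (\<exists>b u m. u \<noteq> (0, 0) \<and> m \<ge> 1 \<and> S = (\<lambda>k. b + smul k u) ` {0..m})"

lemma tie_on_segment_iff:
  assumes "u \<noteq> (0, 0)" "m \<ge> 1" "S = (\<lambda>k. b + smul k u) ` {0..m}"
  shows "(\<exists>l l'. l \<noteq> l' \<and> l \<in> lowest S w \<and> l' \<in> lowest S w) \<longleftrightarrow> pairing u w = 0"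
proof
  assume "\<exists>l l'. l \<noteq> l' \<and> l \<in> lowest S w \<and> l' \<in> lowest S w"
  then obtain l l' where ll: "l \<noteq> l'" "l \<in> lowest S w" "l' \<in> lowest S w"
    by blast
  then obtain k k' where kk: "l = b + smul k u" "l' = b + smul k' u"
    using assms(3) by (auto simp: argmins_def)
  with ll(1) have "k \<noteq> k'"
    by blast
  have "pairing l w = pairing l' w"
    using ll by (auto simp: argmins_def intro: antisym)
  then have "pairing (b + smul k u) w = pairing (b + smul k' u) w"
    by (simp add: kk)
  then have "(of_int k - of_int k') * pairing u w = 0"
    by (simp add: pairing_add_smul algebra_simps)
  with \<open>k \<noteq> k'\<close> show "pairing u w = 0"
    by simp
next
  assume u: "pairing u w = 0"
  then have "lowest S w = S"
    using assms(3) by (auto simp: argmins_def pairing_add_smul)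
  moreover have "b \<in> S" "b + u \<in> S"
    unfolding assms(3) using assms(2)
    by (auto intro: image_eqI[where x = 0] image_eqI[where x = 1] simp: smul_def)
  moreover have "b \<noteq> b + u"
    using assms(1) by (simp add: zero_prod_def)
  ultimately show "\<exists>l l'. l \<noteq> l' \<and> l \<in> lowest S w \<and> l' \<in> lowest S w"
    by blast
qed

lemma pairing_eq_0_iff_on_line:
  assumes "u \<noteq> (0, 0)"
  shows "pairing u w = 0 \<longleftrightarrow> (\<exists>s. w = s *\<^sub>R vec (- snd u, fst u))"
proof
  assume h: "pairing u w = 0"
  show "\<exists>s. w = s *\<^sub>R vec (- snd u, fst u)"
  proof (cases "fst u = 0")
    case False
    with h have "w = (snd w / of_int (fst u)) *\<^sub>R vec (- snd u, fst u)"
      by (simp add: pairing_def vec_def prod_eq_iff field_simps)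
    then show ?thesis ..
  next
    case True
    with assms have "snd u \<noteq> 0"
      by (cases u) auto
    with h True have "w = (- fst w / of_int (snd u)) *\<^sub>R vec (- snd u, fst u)"
      by (simp add: pairing_def vec_def prod_eq_iff field_simps)
    then show ?thesis ..
  qed
qed (auto simp: pairing_def vec_def algebra_simps)

lemma (in tdist_chart) not_vertex_if_segment:
  assumes "lattice_segment S"
  shows "\<not> caustic_vertex \<Phi> p"
proof -
  obtain b u m where u: "u \<noteq> (0, 0)" "m \<ge> 1" "S = (\<lambda>k. b + smul k u) ` {0..m}"
    using assms unfolding lattice_segment_def by blast
  define d where "d = vec (- snd u, fst u)"
  have "d \<noteq> 0"
    using u(1) by (cases u) (auto simp: d_def vec_def zero_prod_def)
  moreover have "caustic \<Phi> \<inter> ball p \<epsilon> = {p + s *\<^sub>R d | s. True} \<inter> ball p \<epsilon>"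
  proof (rule set_eqI)
    fix y
    have "y \<in> caustic \<Phi> \<longleftrightarrow> (\<exists>s. y - p = s *\<^sub>R d)" if "y \<in> ball p \<epsilon>"
      unfolding caustic_iff_tie[OF that] tie_on_segment_iff[OF u] d_def
      by (rule pairing_eq_0_iff_on_line[OF u(1)])
    moreover have "(y - p = x) \<longleftrightarrow> (y = p + x)" for x
      by auto
    ultimately show "y \<in> caustic \<Phi> \<inter> ball p \<epsilon> \<longleftrightarrow> y \<in> {p + s *\<^sub>R d | s. True} \<inter> ball p \<epsilon>"
      by auto
  qed
  ultimately show ?thesis
    using eps_pos unfolding caustic_vertex_def by blast
qed

section \<open>Minimal vectors of a sublinear function on the lattice\<close>

lemma down_closed_int_set:
  fixes P :: "int \<Rightarrow> bool"
  assumes "finite {j. 1 \<le> j \<and> P j}" and down: "\<And>i j. P j \<Longrightarrow> 1 \<le> i \<Longrightarrow> i \<le> j \<Longrightarrow> P i"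
  obtains q where "0 \<le> q" "{j. 1 \<le> j \<and> P j} = {1..q}"
proof -
  define A where "A = {j. 1 \<le> j \<and> P j}"
  define q where "q = Max (insert 0 A)"
  have le_q: "j \<le> q" if "j \<in> A" for j
    unfolding q_def using assms(1) that by (simp add: A_def)
  have "0 \<le> q"
    unfolding q_def using assms(1) by (simp add: A_def)
  moreover have "A = {1..q}"
  proof (cases "A = {}")
    case True
    then show ?thesis
      by (simp add: q_def)
  next
    case False
    then have "q \<in> insert 0 A"
      unfolding q_def using assms(1) by (intro Max_in) (simp_all add: A_def)
    moreover obtain j where "j \<in> A"
      using False by blast
    then have "1 \<le> q"
      using le_q[of j] by (simp add: A_def)
    ultimately have "P q"
      by (auto simp: A_def)
    show ?thesis
    proof (intro set_eqI iffI)
      fix i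
      assume "i \<in> A"
      then show "i \<in> {1..q}"
        using le_q by (simp add: A_def)
    next
      fix i
      assume "i \<in> {1..q}"
      then show "i \<in> A"
        using down[OF \<open>P q\<close>] by (simp add: A_def)
    qed
  qed
  ultimately show thesis
    using that by (simp add: A_def)
qed

text \<open>The convex hull of \<open>An_fan \<delta> \<beta> n\<close> is the \<open>A\<^sub>n\<close> triangle with vertices \<open>-\<delta>\<close>, \<open>\<beta>\<close>, \<open>\<beta> + n \<delta>\<close>.\<close>

definition An_fan :: "int \<times> int \<Rightarrow> int \<times> int \<Rightarrow> int \<Rightarrow> (int \<times> int) set" where
  "An_fan \<delta> \<beta> n = insert (smul (-1) \<delta>) ((\<lambda>j. \<beta> + smul j \<delta>) ` {0..n})"

locale sublinear_minimizers =
  fixes g :: "int \<times> int \<Rightarrow> real" and T :: real and S :: "(int \<times> int) set" and v :: "real \<times> real"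
  assumes g_ge: "\<And>l. l \<noteq> (0, 0) \<Longrightarrow> T \<le> g l"
    and g_add: "\<And>a b. g (a + b) \<le> g a + g b"
    and g_smul: "\<And>k l. k \<ge> 0 \<Longrightarrow> of_int k * g l \<le> g (smul k l)"
    and g_zero: "g (0, 0) = 0"
    and T_pos: "T > 0"
    and S_eq: "S = {l. l \<noteq> (0, 0) \<and> g l = T}"
    and finite_S: "finite S"
    and half_plane: "\<And>s. s \<in> S \<Longrightarrow> pairing s v > 0"
begin

lemma S_nonzero: "s \<in> S \<Longrightarrow> s \<noteq> (0, 0)"
  by (simp add: S_eq)

lemma g_smul_le:
  assumes "k \<ge> 0"
  shows "g (smul k a) \<le> of_int k * g a"
proof -
  have "g (smul (int i) a) \<le> real i * g a" for i
  proof (induction i)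
    case 0
    then show ?case
      by (simp add: g_zero)
  next
    case (Suc i)
    have "smul (int (Suc i)) a = smul (int i) a + a"
      by (simp add: smul_def prod_eq_iff algebra_simps)
    then show ?case
      using g_add[of "smul (int i) a" a] Suc by (simp add: algebra_simps)
  qed
  from this[of "nat k"] assms show ?thesis
    by simp
qed

text \<open>Sublinearity turns \<open>k z = i a + j b\<close> into \<open>k T \<le> k g(z) \<le> (i + j) T\<close>.\<close>

lemma combination_bound:
  assumes "a \<in> S" "b \<in> S" "z \<noteq> (0, 0)" "i \<ge> 0" "j \<ge> 0" "k \<ge> 1"
    and eq: "smul k z = smul i a + smul j b"
  shows "k \<le> i + j" and "k = i + j \<Longrightarrow> z \<in> S"
proof -
  have "of_int k * g z \<le> g (smul k z)"
    using g_smul assms(6) by simp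
  also have "\<dots> \<le> g (smul i a) + g (smul j b)"
    unfolding eq by (rule g_add)
  also have "\<dots> \<le> of_int (i + j) * T"
    using g_smul_le[OF assms(4), of a] g_smul_le[OF assms(5), of b] assms(1,2)
    by (simp add: S_eq algebra_simps)
  finally have upper: "of_int k * g z \<le> of_int (i + j) * T" .
  have lower: "T \<le> g z"
    using g_ge[OF assms(3)] .
  then have "of_int k * T \<le> of_int k * g z"
    using assms(6) by (simp add: mult_left_mono)
  then have "of_int k * T \<le> of_int (i + j) * T"
    using upper by linarith
  then show "k \<le> i + j"
    using T_pos by simp
  assume "k = i + j"
  with upper assms(6) have "g z \<le> T"
    by simp
  with lower assms(3) show "z \<in> S"
    by (simp add: S_eq)
qed

lemma eq_if_smul_eq:
  assumes "c \<noteq> 0" "smul c s = smul d t" "s \<in> S" "t \<in> S"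
  shows "s = t"
proof -
  have pos: "pairing s v > 0" "pairing t v > 0"
    using half_plane assms(3,4) by auto
  have eq: "of_int c * pairing s v = of_int d * pairing t v"
    using arg_cong[OF assms(2), of "\<lambda>l. pairing l v"] by (simp add: pairing_smul)
  have "0 < (of_int c :: real)\<^sup>2"
    using assms(1) by simp
  with pos(1) have "0 < of_int c * of_int c * pairing s v"
    by (simp add: power2_eq_square)
  also have "\<dots> = of_int c * of_int d * pairing t v"
    using eq by (simp add: mult.assoc)
  finally have "0 < real_of_int c * of_int d"
    using pos(2) by (metis zero_less_mult_pos2)
  then have cd: "0 < c * d"
    by (metis of_int_0_less_iff of_int_mult)
  have abs_eq: "smul \<bar>c\<bar> s = smul \<bar>d\<bar> t"
  proof (cases "c > 0")
    case True
    with cd have "d > 0"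
      by (simp add: zero_less_mult_iff)
    with True assms(2) show ?thesis
      by simp
  next
    case False
    with cd have "c < 0" "d < 0"
      by (auto simp: zero_less_mult_iff)
    with assms(2) show ?thesis
      by (simp add: smul_def prod_eq_iff)
  qed
  have "\<bar>d\<bar> \<le> \<bar>c\<bar> + 0"
    by (rule combination_bound(1)[OF assms(3,3) S_nonzero[OF assms(4)]])
      (use abs_eq cd in \<open>auto simp: zero_less_mult_iff\<close>)
  moreover have "\<bar>c\<bar> \<le> \<bar>d\<bar> + 0"
    by (rule combination_bound(1)[OF assms(4,4) S_nonzero[OF assms(3)]])
      (use abs_eq cd in \<open>auto simp: zero_less_mult_iff\<close>)
  ultimately show ?thesis
    using abs_eq assms(1) by (auto simp: smul_def prod_eq_iff)
qed

lemma eq_if_det2_eq_0: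
  assumes "s \<in> S" "t \<in> S" "det2 s t = 0"
  shows "s = t"
proof -
  have "smul (fst t) s = smul (fst s) t" "smul (snd t) s = smul (snd s) t"
    using assms(3) by (simp_all add: smul_def det2_def prod_eq_iff algebra_simps)
  moreover have "fst t \<noteq> 0 \<or> snd t \<noteq> 0"
    using S_nonzero[OF assms(2)] by (cases t) auto
  ultimately show ?thesis
    using eq_if_smul_eq[OF _ _ assms(1,2)] by metis
qed

text \<open>Seen from the open half-plane containing \<^term>\<open>S\<close>, the sign of \<^term>\<open>det2\<close> orders \<^term>\<open>S\<close> by
  angle; \<^term>\<open>slope\<close> is a real-valued version of this order.\<close>

definition slope :: "int \<times> int \<Rightarrow> real" where
  "slope s = (fst v * of_int (snd s) - snd v * of_int (fst s)) / pairing s v"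

lemma slope_le_iff:
  assumes "s \<in> S" "t \<in> S"
  shows "slope s \<le> slope t \<longleftrightarrow> 0 \<le> det2 s t"
proof -
  define cs where "cs = fst v * of_int (snd s) - snd v * of_int (fst s)"
  define ct where "ct = fst v * of_int (snd t) - snd v * of_int (fst t)"
  have P: "pairing s v > 0" "pairing t v > 0"
    using half_plane assms by auto
  then have "v \<noteq> 0"
    by (auto simp: pairing_def zero_prod_def)
  then have vnz: "(fst v)\<^sup>2 + (snd v)\<^sup>2 > 0"
    by (cases v) (auto simp: sum_power2_gt_zero_iff zero_prod_def)
  have id: "pairing s v * ct - pairing t v * cs = ((fst v)\<^sup>2 + (snd v)\<^sup>2) * of_int (det2 s t)"
    by (simp add: cs_def ct_def pairing_def det2_def power2_eq_square algebra_simps)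
  have "slope s \<le> slope t \<longleftrightarrow> cs * pairing t v \<le> ct * pairing s v"
    using P by (simp add: slope_def cs_def ct_def divide_le_eq le_divide_eq field_simps)
  also have "\<dots> \<longleftrightarrow> 0 \<le> pairing s v * ct - pairing t v * cs"
    by (simp add: mult.commute)
  also have "\<dots> \<longleftrightarrow> 0 \<le> ((fst v)\<^sup>2 + (snd v)\<^sup>2) * of_int (det2 s t)"
    unfolding id ..
  also have "\<dots> \<longleftrightarrow> 0 \<le> det2 s t"
    using vnz by (simp add: zero_le_mult_iff)
  finally show ?thesis .
qed

lemma primitive:
  assumes "s \<in> S"
  shows "gcd (fst s) (snd s) = 1"
proof -
  define k where "k = gcd (fst s) (snd s)"
  have "k > 0"
    using S_nonzero[OF assms] by (cases s) (auto simp: k_def)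
  define s' where "s' = (fst s div k, snd s div k)"
  have "smul k s' = s"
    by (simp add: s'_def smul_def k_def prod_eq_iff)
  then have "s' \<noteq> (0, 0)" "smul k s' = smul 1 s + smul 0 s"
    using S_nonzero[OF assms] by (auto simp: smul_def)
  then have "k \<le> 1"
    using combination_bound(1)[OF assms assms, of s' 1 0 k] \<open>k > 0\<close> by simp
  with \<open>k > 0\<close> show ?thesis
    unfolding k_def by linarith
qed

text \<open>Complete the primitive vector \<open>a\<close> to a basis \<open>(a, w)\<close> and reduce \<open>b\<close> modulo \<open>a\<close>:
  the vector \<open>z\<close> with \<open>d z = j a + b\<close>, \<open>d = det2 a b\<close>, \<open>0 \<le> j < d\<close>, is forced into \<open>S\<close> by
  \<open>combination_bound\<close>, and lies strictly right of \<open>b\<close> unless \<open>j = 0\<close>.\<close>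

lemma det2_eq_1_if_adjacent:
  assumes a: "a \<in> S" and b: "b \<in> S" and pos: "det2 a b > 0"
    and adjacent: "\<And>s. s \<in> S \<Longrightarrow> s \<noteq> a \<Longrightarrow> 0 \<le> det2 b s"
  shows "det2 a b = 1"
proof -
  define d where "d = det2 a b"
  obtain x y where "x * fst a + y * snd a = 1"
    using bezout_int[of "fst a" "snd a"] primitive[OF a] by auto
  then have aw: "det2 a (-y, x) = 1"
    by (simp add: det2_def algebra_simps)
  define w where "w = (-y, x)"
  define \<alpha> where "\<alpha> = det2 b w"
  have b_eq: "b = smul \<alpha> a + smul d w"
    using smul_det2_cramer[of a w b] aw by (simp add: \<alpha>_def d_def w_def)
  define j where "j = (-\<alpha>) mod d"
  define q where "q = (-\<alpha>) div d"
  have j: "0 \<le> j" "j < d"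
    using pos by (simp_all add: j_def d_def)
  define z where "z = smul (-q) a + w"
  have qj: "q * d + j = -\<alpha>"
    by (simp add: q_def j_def)
  have "smul d z = smul (- q * d) a + smul d w"
    by (simp add: z_def smul_def prod_eq_iff algebra_simps)
  also have "- q * d = j + \<alpha>"
    using qj by simp
  finally have dz: "smul d z = smul j a + smul 1 b"
    by (simp add: b_eq smul_def prod_eq_iff algebra_simps)
  have az: "det2 a z = 1"
    using aw by (simp add: z_def w_def det2_def smul_def algebra_simps)
  then have "z \<noteq> (0, 0)" "z \<noteq> a"
    by (auto simp: det2_def)
  have "d \<le> j + 1"
    using combination_bound(1)[OF a b \<open>z \<noteq> (0, 0)\<close> j(1), of 1 d] dz pos by (simp add: d_def)
  then have "d = j + 1"
    using j by simp
  have "z \<in> S"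
    by (rule combination_bound(2)[OF a b \<open>z \<noteq> (0, 0)\<close> j(1), of 1 d]) (use dz pos \<open>d = j + 1\<close> in \<open>simp_all add: d_def\<close>)
  have "det2 b z = q * d + \<alpha>"
    by (simp add: z_def \<alpha>_def d_def det2_def smul_def algebra_simps)
  then have "det2 b z = - j"
    using qj by simp
  with adjacent[OF \<open>z \<in> S\<close> \<open>z \<noteq> a\<close>] j have "j = 0"
    by simp
  with \<open>d = j + 1\<close> show ?thesis
    by (simp add: d_def)
qed

lemma extreme_pair:
  assumes "a0 \<in> S" "b0 \<in> S" "a0 \<noteq> b0"
  obtains a b where "a \<in> S" "b \<in> S" "det2 a b = 1"
    and "\<And>s. s \<in> S \<Longrightarrow> s \<noteq> a \<Longrightarrow> s \<noteq> b \<Longrightarrow> 0 < det2 a s \<and> 0 < det2 b s"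
proof -
  obtain a where a: "a \<in> argmins slope S"
    using argmins_nonempty[OF finite_S] assms(1) by blast
  have "S - {a} \<noteq> {}"
    using assms by blast
  then obtain b where b: "b \<in> argmins slope (S - {a})"
    using argmins_nonempty[of "S - {a}"] finite_S by blast
  have aS: "a \<in> S" and bS: "b \<in> S" "b \<noteq> a"
    using a b by (auto simp: argmins_def)
  have det_a: "0 < det2 a s" if "s \<in> S" "s \<noteq> a" for s
  proof -
    have "slope a \<le> slope s"
      using a that(1) by (simp add: argmins_def)
    then have "0 \<le> det2 a s"
      using slope_le_iff[OF aS that(1)] by simp
    moreover have "det2 a s \<noteq> 0"
      using eq_if_det2_eq_0[OF aS that(1)] that(2) by auto
    ultimately show ?thesis
      by simp
  qed
  have det_b: "0 \<le> det2 b s" if "s \<in> S" "s \<noteq> a" for s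
  proof -
    have "slope b \<le> slope s"
      using b that by (simp add: argmins_def)
    then show ?thesis
      using slope_le_iff[OF bS(1) that(1)] by simp
  qed
  have "det2 a b = 1"
    using det2_eq_1_if_adjacent[OF aS bS(1) det_a[OF bS] det_b] .
  moreover have "0 < det2 b s" if "s \<in> S" "s \<noteq> a" "s \<noteq> b" for s
  proof -
    have "det2 b s \<noteq> 0"
      using eq_if_det2_eq_0[OF bS(1) that(1)] that(3) by auto
    with det_b[OF that(1,2)] show ?thesis
      by simp
  qed
  ultimately show thesis
    using that[OF aS bS(1)] det_a by blast
qed

end

locale adjacent_minimizers = sublinear_minimizers +
  fixes a b :: "int \<times> int"
  assumes a_in: "a \<in> S" and b_in: "b \<in> S" and det_ab: "det2 a b = 1"
    and left_of_ab: "\<And>s. s \<in> S \<Longrightarrow> s \<noteq> a \<Longrightarrow> s \<noteq> b \<Longrightarrow> 0 < det2 a s \<and> 0 < det2 b s"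
begin

lemma lincomb_nonzero: "x \<noteq> 0 \<or> y \<noteq> 0 \<Longrightarrow> lincomb a b x y \<noteq> (0, 0)"
  using lincomb_eq_iff[OF det_ab, of x y 0 0] by (simp add: lincomb_def)

lemma other_minimizer_coords:
  assumes s: "s \<in> S" "s \<noteq> a" "s \<noteq> b"
  obtains X where "1 \<le> X" "s = lincomb a b (-X) 1 \<or> s = lincomb a b (-X) (X + 1)"
proof -
  define X where "X = det2 b s"
  define Y where "Y = det2 a s"
  have XY: "1 \<le> X" "1 \<le> Y"
    using left_of_ab[OF s] by (simp_all add: X_def Y_def)
  have s_eq: "s = lincomb a b (-X) Y"
    unfolding X_def Y_def by (rule lincomb_coords[OF det_ab])
  have "smul Y b = smul 1 s + smul X a"
    by (simp add: s_eq lincomb_def smul_def prod_eq_iff algebra_simps)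
  then have "Y \<le> 1 + X"
    using combination_bound(1)[OF s(1) a_in S_nonzero[OF b_in], of 1 X Y] XY by simp
  moreover have "\<not> (2 \<le> Y \<and> Y \<le> X)"
  proof
    assume Y: "2 \<le> Y \<and> Y \<le> X"
    have "smul X (lincomb a b (-1) 1) = smul 1 s + smul (X - Y) b"
      by (simp add: s_eq lincomb_def smul_def prod_eq_iff algebra_simps)
    then have "X \<le> 1 + (X - Y)"
      using combination_bound(1)[OF s(1) b_in lincomb_nonzero, of "-1" 1 1 "X - Y" X] XY Y by simp
    with Y show False
      by simp
  qed
  ultimately have "Y = 1 \<or> Y = X + 1"
    using XY by linarith
  with s_eq XY that show thesis
    by blast
qed

lemma lower_first_kind:
  assumes "lincomb a b (-q) 1 \<in> S" "1 \<le> j" "j \<le> q"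
  shows "lincomb a b (-j) 1 \<in> S"
proof (rule combination_bound(2)[OF assms(1) b_in lincomb_nonzero])
  show "smul q (lincomb a b (-j) 1) = smul j (lincomb a b (-q) 1) + smul (q - j) b"
    by (simp add: lincomb_def smul_def prod_eq_iff algebra_simps)
qed (use assms in simp_all)

lemma lower_second_kind:
  assumes "lincomb a b (-r) (r + 1) \<in> S" "1 \<le> j" "j \<le> r"
  shows "lincomb a b (-j) (j + 1) \<in> S"
proof (rule combination_bound(2)[OF assms(1) b_in lincomb_nonzero])
  show "smul r (lincomb a b (-j) (j + 1)) = smul j (lincomb a b (-r) (r + 1)) + smul (r - j) b"
    by (simp add: lincomb_def smul_def prod_eq_iff algebra_simps)
qed (use assms in simp_all)

lemma not_both_kinds: "\<not> (lincomb a b (-2) 1 \<in> S \<and> lincomb a b (-1) 2 \<in> S)"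
proof
  assume both: "lincomb a b (-2) 1 \<in> S \<and> lincomb a b (-1) 2 \<in> S"
  have "3 \<le> (1 + 1 :: int)"
  proof (rule combination_bound(1)[OF both[THEN conjunct1] both[THEN conjunct2] lincomb_nonzero])
    show "smul 3 (lincomb a b (-1) 1) = smul 1 (lincomb a b (-2) 1) + smul 1 (lincomb a b (-1) 2)"
      by (simp add: lincomb_def smul_def prod_eq_iff algebra_simps)
  qed simp_all
  then show False
    by simp
qed

lemma S_shape:
  obtains q r where "0 \<le> q" "0 \<le> r" "\<not> (2 \<le> q \<and> 1 \<le> r)"
    "S = {a, b} \<union> (\<lambda>j. lincomb a b (-j) 1) ` {1..q} \<union> (\<lambda>j. lincomb a b (-j) (j + 1)) ` {1..r}"
proof -
  have fin: "finite {j. 1 \<le> j \<and> f j \<in> S}" if "inj f" for f :: "int \<Rightarrow> int \<times> int"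
    using finite_vimageI[OF finite_S that] by (rule finite_subset[rotated]) auto
  have "inj (\<lambda>j. lincomb a b (-j) 1)" "inj (\<lambda>j. lincomb a b (-j) (j + 1))"
    by (auto intro: injI simp: lincomb_eq_iff[OF det_ab])
  note fin = this[THEN fin]
  obtain q where q: "0 \<le> q" "{j. 1 \<le> j \<and> lincomb a b (-j) 1 \<in> S} = {1..q}"
    using down_closed_int_set[of "\<lambda>j. lincomb a b (-j) 1 \<in> S"] fin(1) lower_first_kind by blast
  obtain r where r: "0 \<le> r" "{j. 1 \<le> j \<and> lincomb a b (-j) (j + 1) \<in> S} = {1..r}"
    using down_closed_int_set[of "\<lambda>j. lincomb a b (-j) (j + 1) \<in> S"] fin(2) lower_second_kind by blast
  have first: "lincomb a b (-j) 1 \<in> S \<longleftrightarrow> j \<le> q" if "1 \<le> j" for j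
    using that q(2)[unfolded set_eq_iff, rule_format, of j] by auto
  have second: "lincomb a b (-j) (j + 1) \<in> S \<longleftrightarrow> j \<le> r" if "1 \<le> j" for j
    using that r(2)[unfolded set_eq_iff, rule_format, of j] by auto
  have "\<not> (2 \<le> q \<and> 1 \<le> r)"
    using first[of 2] second[of 1] not_both_kinds by auto
  moreover have "S = {a, b} \<union> (\<lambda>j. lincomb a b (-j) 1) ` {1..q} \<union> (\<lambda>j. lincomb a b (-j) (j + 1)) ` {1..r}"
  proof (intro set_eqI iffI)
    fix s
    assume s: "s \<in> S"
    show "s \<in> {a, b} \<union> (\<lambda>j. lincomb a b (-j) 1) ` {1..q} \<union> (\<lambda>j. lincomb a b (-j) (j + 1)) ` {1..r}"
    proof (cases "s = a \<or> s = b")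
      case False
      then obtain X where "1 \<le> X" "s = lincomb a b (-X) 1 \<or> s = lincomb a b (-X) (X + 1)"
        using other_minimizer_coords s by blast
      then show ?thesis
        using first[of X] second[of X] s by auto
    qed auto
  next
    fix s
    assume "s \<in> {a, b} \<union> (\<lambda>j. lincomb a b (-j) 1) ` {1..q} \<union> (\<lambda>j. lincomb a b (-j) (j + 1)) ` {1..r}"
    then show "s \<in> S"
      using a_in b_in first second by auto
  qed
  ultimately show thesis
    using that q(1) r(1) by blast
qed

lemma segment_shape:
  assumes "0 \<le> r"
  shows "lattice_segment ({a, b} \<union> (\<lambda>j. lincomb a b (-j) (j + 1)) ` {1..r})"
proof -
  define u where "u = lincomb a b (-1) 1"
  have split: "{0..r + 1} = {0, 1} \<union> (\<lambda>j. j + 1) ` {1..r}"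
    using assms by auto
  have ak: "a + smul k u = lincomb a b (1 - k) k" for k
    by (simp add: u_def lincomb_def smul_def prod_eq_iff algebra_simps)
  have "(\<lambda>k. a + smul k u) ` {0..r + 1} = {a, b} \<union> (\<lambda>j. lincomb a b (-j) (j + 1)) ` {1..r}"
    unfolding split image_Un image_image ak by simp
  moreover have "u \<noteq> (0, 0)"
    unfolding u_def by (rule lincomb_nonzero) simp
  ultimately show ?thesis
    unfolding lattice_segment_def using assms by (intro exI[of _ a] exI[of _ u] exI[of _ "r + 1"]) simp
qed

lemma An_fan_shape_first_kind:
  assumes "1 \<le> q"
  shows "{a, b} \<union> (\<lambda>j. lincomb a b (-j) 1) ` {1..q} = An_fan (lincomb a b (-1) 0) b q"
proof -
  have "{0..q} = insert 0 {1..q}"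
    using assms by auto
  moreover have "b + smul j (lincomb a b (-1) 0) = lincomb a b (-j) 1" for j
    by (simp add: lincomb_def smul_def prod_eq_iff algebra_simps)
  moreover have "smul (-1) (lincomb a b (-1) 0) = a"
    by (simp add: lincomb_def smul_def)
  ultimately show ?thesis
    by (auto simp: An_fan_def)
qed

lemma An_fan_shape_mixed:
  assumes "1 \<le> r"
  shows "insert (lincomb a b (-1) 1) ({a, b} \<union> (\<lambda>j. lincomb a b (-j) (j + 1)) ` {1..r}) =
    An_fan (lincomb a b 1 (-1)) (lincomb a b (-r) (r + 1)) (r + 1)"
proof -
  have split: "{0..r + 1} = {r, r + 1} \<union> (\<lambda>j. r - j) ` {1..r}"
    using assms by auto
  have fan_j: "lincomb a b (-r) (r + 1) + smul j (lincomb a b 1 (-1)) = lincomb a b (j - r) (r + 1 - j)" for j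
    by (simp add: lincomb_def smul_def prod_eq_iff algebra_simps)
  have "(\<lambda>j. lincomb a b (-r) (r + 1) + smul j (lincomb a b 1 (-1))) ` {0..r + 1} =
      {b, a} \<union> (\<lambda>j. lincomb a b (-j) (j + 1)) ` {1..r}"
    unfolding split image_Un image_image fan_j by (simp add: add.commute)
  moreover have "smul (-1) (lincomb a b 1 (-1)) = lincomb a b (-1) 1"
    by (simp add: lincomb_def smul_def)
  ultimately show ?thesis
    by (auto simp: An_fan_def)
qed

lemma shape_cases: "lattice_segment S \<or> (\<exists>\<delta> \<beta> n. 1 \<le> n \<and> \<bar>det2 \<delta> \<beta>\<bar> = 1 \<and> S = An_fan \<delta> \<beta> n)"
proof -
  obtain q r where qr: "0 \<le> q" "0 \<le> r" "\<not> (2 \<le> q \<and> 1 \<le> r)"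
    and S: "S = {a, b} \<union> (\<lambda>j. lincomb a b (-j) 1) ` {1..q} \<union> (\<lambda>j. lincomb a b (-j) (j + 1)) ` {1..r}"
    by (rule S_shape)
  consider "q = 0" | "1 \<le> q" "r = 0" | "q = 1" "1 \<le> r"
    using qr by linarith
  then show ?thesis
  proof cases
    case 1
    then show ?thesis
      using S segment_shape[OF qr(2)] by simp
  next
    case 2
    have "det2 (lincomb a b (-1) 0) b = -1"
      using det2_lincomb[of a b "-1" 0 0 1] det_ab by simp
    with 2 show ?thesis
      using S An_fan_shape_first_kind[of q] by (intro disjI2 exI[of _ "lincomb a b (-1) 0"] exI[of _ b] exI[of _ q]) auto
  next
    case 3
    have "det2 (lincomb a b 1 (-1)) (lincomb a b (-r) (r + 1)) = 1"
      using det2_lincomb[of a b 1 "-1" "-r" "r + 1"] det_ab by simp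
    moreover have "S = insert (lincomb a b (-1) 1) ({a, b} \<union> (\<lambda>j. lincomb a b (-j) (j + 1)) ` {1..r})"
      using S 3 by auto
    ultimately show ?thesis
      using 3 An_fan_shape_mixed[of r]
      by (intro disjI2 exI[of _ "lincomb a b 1 (-1)"] exI[of _ "lincomb a b (-r) (r + 1)"] exI[of _ "r + 1"]) auto
  qed
qed

end

lemma (in sublinear_minimizers) segment_or_An_fan:
  assumes "a0 \<in> S" "b0 \<in> S" "a0 \<noteq> b0"
  shows "lattice_segment S \<or> (\<exists>\<delta> \<beta> n. 1 \<le> n \<and> \<bar>det2 \<delta> \<beta>\<bar> = 1 \<and> S = An_fan \<delta> \<beta> n)"
proof -
  obtain a b where "a \<in> S" "b \<in> S" "det2 a b = 1"
    and "\<And>s. s \<in> S \<Longrightarrow> s \<noteq> a \<Longrightarrow> s \<noteq> b \<Longrightarrow> 0 < det2 a s \<and> 0 < det2 b s"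
    using extreme_pair[OF assms] by blast
  then interpret adjacent_minimizers g T S v a b
    by unfold_locales
  show ?thesis
    by (rule shape_cases)
qed

section \<open>The tie locus of an \<open>A\<^sub>n\<close> fan\<close>

lemma apex_tie_cases:
  fixes A B :: real and j n :: int
  assumes "0 \<le> j" "j \<le> n" "- A = B + of_int j * A" "- A \<le> B" "- A \<le> B + of_int n * A"
  shows "(A = 0 \<and> B \<le> 0) \<or> (0 \<le> A \<and> B = - A) \<or> (A \<le> 0 \<and> B = - (of_int n + 1) * A)"
proof (cases "A < 0")
  case True
  have "0 \<le> (of_int n - of_int j) * A"
    using assms(3,5) by (simp add: algebra_simps)
  moreover have "(of_int n - of_int j) * A \<le> 0"
    using True assms(2) by (simp add: mult_nonneg_nonpos)
  ultimately have "real_of_int n = of_int j"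
    using True by simp
  then show ?thesis
    using True assms(3) by (simp add: algebra_simps)
next
  case False
  then have "0 \<le> of_int j * A"
    using assms(1) by simp
  then show ?thesis
    using False assms(3,4) by (cases "A = 0") simp_all
qed

locale An_frame =
  fixes \<delta> \<beta> :: "int \<times> int" and n :: nat
  assumes n_pos: "1 \<le> n" and det_unit: "\<bar>det2 \<delta> \<beta>\<bar> = 1"
begin

text \<open>The basis \<open>e1, e2\<close> is chosen so that in the coordinates \<open>w = x e1 + y e2\<close> the forms of the
  fan read \<open>x\<close> (for \<open>-\<delta>\<close>) and \<open>(n + 1 - j) x - y\<close> (for \<open>\<beta> + j \<delta>\<close>).\<close>

definition e1 :: "int \<times> int" where
  "e1 = (det2 \<delta> \<beta> * (- snd \<beta> - (int n + 1) * snd \<delta>), det2 \<delta> \<beta> * ((int n + 1) * fst \<delta> + fst \<beta>))"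

definition e2 :: "int \<times> int" where
  "e2 = (det2 \<delta> \<beta> * snd \<delta>, - det2 \<delta> \<beta> * fst \<delta>)"

abbreviation d2 :: "int \<times> int" where
  "d2 \<equiv> (- fst e1 - int n * fst e2, - snd e1 - int n * snd e2)"

lemma det_sq: "det2 \<delta> \<beta> * det2 \<delta> \<beta> = 1"
  using det_unit by (metis abs_mult_self_eq mult_1_left)

lemma ipair_basis:
  "ipair \<delta> e1 = -1" "ipair \<beta> e1 = int n + 1" "ipair \<delta> e2 = 0" "ipair \<beta> e2 = -1"
  "ipair \<delta> d2 = 1" "ipair \<beta> d2 = -1"
proof -
  have "ipair \<delta> e1 = - (det2 \<delta> \<beta> * det2 \<delta> \<beta>)" "ipair \<beta> e1 = (int n + 1) * (det2 \<delta> \<beta> * det2 \<delta> \<beta>)"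
    "ipair \<delta> e2 = 0" "ipair \<beta> e2 = - (det2 \<delta> \<beta> * det2 \<delta> \<beta>)"
    by (simp_all add: e1_def e2_def ipair_def det2_def algebra_simps)
  then show e: "ipair \<delta> e1 = -1" "ipair \<beta> e1 = int n + 1" "ipair \<delta> e2 = 0" "ipair \<beta> e2 = -1"
    by (simp_all add: det_sq)
  have "ipair l d2 = - ipair l e1 - int n * ipair l e2" for l
    by (simp add: ipair_def algebra_simps)
  with e show "ipair \<delta> d2 = 1" "ipair \<beta> d2 = -1"
    by simp_all
qed

lemma lattice_basis_e1_e2: "lattice_basis e1 e2"
proof -
  have "fst e1 * snd e2 - snd e1 * fst e2 = det2 \<delta> \<beta> * (det2 \<delta> \<beta> * det2 \<delta> \<beta>)"
    by (simp add: e1_def e2_def det2_def algebra_simps)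
  then show ?thesis
    using det_sq det_unit by (simp add: lattice_basis_def)
qed

lemma mem_An_fan: "l \<in> An_fan \<delta> \<beta> n \<longleftrightarrow> l = smul (-1) \<delta> \<or> (\<exists>j\<in>{0..int n}. l = \<beta> + smul j \<delta>)"
  by (auto simp: An_fan_def)

lemma apex_in: "smul (-1) \<delta> \<in> An_fan \<delta> \<beta> n"
  and ray_in: "0 \<le> j \<Longrightarrow> j \<le> int n \<Longrightarrow> \<beta> + smul j \<delta> \<in> An_fan \<delta> \<beta> n"
  by (auto simp: mem_An_fan)

lemma apex_ne: "smul (-1) \<delta> \<noteq> \<beta> + smul j \<delta>"
proof
  assume "smul (-1) \<delta> = \<beta> + smul j \<delta>"
  then have "\<beta> = smul (- 1 - j) \<delta>"
    by (auto simp: smul_def prod_eq_iff algebra_simps)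
  then show False
    using det_unit by (simp add: det2_def smul_def algebra_simps)
qed

lemma ray_ne: "j \<noteq> k \<Longrightarrow> \<beta> + smul j \<delta> \<noteq> \<beta> + smul k \<delta>"
  using det_unit by (cases \<delta>) (auto simp: smul_def det2_def)

lemma pairing_apex: "pairing (smul (-1) \<delta>) w = - pairing \<delta> w"
  by (simp add: pairing_smul)

lemma below_An_fan_iff:
  "(\<forall>s\<in>An_fan \<delta> \<beta> n. x \<le> pairing s w) \<longleftrightarrow>
     x \<le> - pairing \<delta> w \<and> (\<forall>j\<in>{0..int n}. x \<le> pairing \<beta> w + of_int j * pairing \<delta> w)"
proof
  assume h: "\<forall>s\<in>An_fan \<delta> \<beta> n. x \<le> pairing s w"
  have "x \<le> pairing (smul (-1) \<delta>) w"
    using h apex_in by blast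
  moreover have "x \<le> pairing (\<beta> + smul j \<delta>) w" if "j \<in> {0..int n}" for j
    using h ray_in that by simp
  ultimately show "x \<le> - pairing \<delta> w \<and> (\<forall>j\<in>{0..int n}. x \<le> pairing \<beta> w + of_int j * pairing \<delta> w)"
    by (simp add: pairing_apex pairing_add_smul)
qed (auto simp: mem_An_fan pairing_apex pairing_add_smul)

definition tie_values :: "real \<Rightarrow> real \<Rightarrow> bool" where
  "tie_values A B \<longleftrightarrow> (A = 0 \<and> B \<le> 0) \<or> (0 \<le> A \<and> B = - A) \<or> (A \<le> 0 \<and> B = - (of_nat n + 1) * A)"

lemma tie_values_if_apex_tie:
  assumes apex: "smul (-1) \<delta> \<in> lowest (An_fan \<delta> \<beta> n) w"
    and j: "0 \<le> j" "j \<le> int n" "\<beta> + smul j \<delta> \<in> lowest (An_fan \<delta> \<beta> n) w"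
  shows "tie_values (pairing \<delta> w) (pairing \<beta> w)"
proof -
  have "pairing (smul (-1) \<delta>) w = pairing (\<beta> + smul j \<delta>) w"
    using apex j(3) by (auto simp: argmins_def intro: antisym)
  then have "- pairing \<delta> w = pairing \<beta> w + of_int j * pairing \<delta> w"
    by (simp add: pairing_apex pairing_add_smul)
  moreover have below: "\<forall>i\<in>{0..int n}. - pairing \<delta> w \<le> pairing \<beta> w + of_int i * pairing \<delta> w"
    using apex unfolding argmins_def below_An_fan_iff by (simp add: pairing_apex)
  then have "- pairing \<delta> w \<le> pairing \<beta> w" "- pairing \<delta> w \<le> pairing \<beta> w + of_int (int n) * pairing \<delta> w"
    using bspec[OF below, of 0] bspec[OF below, of "int n"] by simp_all
  ultimately have "(pairing \<delta> w = 0 \<and> pairing \<beta> w \<le> 0) \<or> (0 \<le> pairing \<delta> w \<and> pairing \<beta> w = - pairing \<delta> w) \<or>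
      (pairing \<delta> w \<le> 0 \<and> pairing \<beta> w = - (of_int (int n) + 1) * pairing \<delta> w)"
    by (rule apex_tie_cases[OF j(1,2)])
  then show ?thesis
    by (simp add: tie_values_def algebra_simps)
qed

lemma tie_values_if_tie:
  assumes ll: "l \<noteq> l'" "l \<in> lowest (An_fan \<delta> \<beta> n) w" "l' \<in> lowest (An_fan \<delta> \<beta> n) w"
  shows "tie_values (pairing \<delta> w) (pairing \<beta> w)"
proof (cases "l = smul (-1) \<delta> \<or> l' = smul (-1) \<delta>")
  case True
  define m where "m = (if l = smul (-1) \<delta> then l' else l)"
  have apex: "smul (-1) \<delta> \<in> lowest (An_fan \<delta> \<beta> n) w"
    using True ll by auto
  have m: "m \<in> lowest (An_fan \<delta> \<beta> n) w" "m \<noteq> smul (-1) \<delta>"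
    using True ll by (auto simp: m_def)
  then have "m \<in> An_fan \<delta> \<beta> n"
    by (simp add: argmins_def)
  with m(2) obtain j where "0 \<le> j" "j \<le> int n" "m = \<beta> + smul j \<delta>"
    by (auto simp: mem_An_fan)
  with m(1) show ?thesis
    using tie_values_if_apex_tie[OF apex] by simp
next
  case False
  have "l \<in> An_fan \<delta> \<beta> n" "l' \<in> An_fan \<delta> \<beta> n"
    using ll by (simp_all add: argmins_def)
  with False obtain i j where ij: "l = \<beta> + smul i \<delta>" "l' = \<beta> + smul j \<delta>"
    by (auto simp: mem_An_fan)
  with ll(1) have "i \<noteq> j"
    by auto
  have "pairing l w = pairing l' w"
    using ll by (auto simp: argmins_def intro: antisym)
  with ij have "(of_int i - of_int j) * pairing \<delta> w = 0"
    by (simp add: pairing_add_smul algebra_simps)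
  with \<open>i \<noteq> j\<close> have A0: "pairing \<delta> w = 0"
    by simp
  moreover have "pairing \<beta> w \<le> 0"
    using ll(2) ij(1) A0 unfolding argmins_def below_An_fan_iff by (simp add: pairing_add_smul)
  ultimately show ?thesis
    by (simp add: tie_values_def)
qed

lemma tie_if_tie_values:
  assumes "tie_values (pairing \<delta> w) (pairing \<beta> w)"
  shows "\<exists>l l'. l \<noteq> l' \<and> l \<in> lowest (An_fan \<delta> \<beta> n) w \<and> l' \<in> lowest (An_fan \<delta> \<beta> n) w"
proof -
  consider "pairing \<delta> w = 0 \<and> pairing \<beta> w \<le> 0" | "0 \<le> pairing \<delta> w \<and> pairing \<beta> w = - pairing \<delta> w"
    | "pairing \<delta> w \<le> 0 \<and> pairing \<beta> w = - (of_nat n + 1) * pairing \<delta> w"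
    using assms by (auto simp: tie_values_def)
  then show ?thesis
  proof cases
    case 1
    have low: "\<beta> + smul j \<delta> \<in> lowest (An_fan \<delta> \<beta> n) w" if "0 \<le> j" "j \<le> int n" for j
      using ray_in[OF that] 1 by (simp add: argmins_def below_An_fan_iff pairing_add_smul)
    have "\<beta> + smul 0 \<delta> \<in> lowest (An_fan \<delta> \<beta> n) w" "\<beta> + smul 1 \<delta> \<in> lowest (An_fan \<delta> \<beta> n) w"
      using low[of 0] low[of 1] n_pos by simp_all
    moreover have "\<beta> + smul 0 \<delta> \<noteq> \<beta> + smul 1 \<delta>"
      by (rule ray_ne) simp
    ultimately show ?thesis
      by blast
  next
    case 2
    then have "smul (-1) \<delta> \<in> lowest (An_fan \<delta> \<beta> n) w" "\<beta> \<in> lowest (An_fan \<delta> \<beta> n) w"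
      using apex_in ray_in[of 0] by (auto simp: argmins_def below_An_fan_iff pairing_apex)
    moreover have "smul (-1) \<delta> \<noteq> \<beta>"
      using apex_ne[of 0] by simp
    ultimately show ?thesis
      by blast
  next
    case 3
    have "- pairing \<delta> w \<le> pairing \<beta> w + of_int j * pairing \<delta> w" if "j \<le> int n" for j
    proof -
      have "0 \<le> (of_int j - of_int (int n)) * pairing \<delta> w"
        using that 3 by (intro mult_nonpos_nonpos) auto
      with 3 show ?thesis
        by (simp add: algebra_simps)
    qed
    moreover have "pairing (\<beta> + smul n \<delta>) w = - pairing \<delta> w"
      using 3 by (simp add: pairing_add_smul algebra_simps)
    ultimately have "smul (-1) \<delta> \<in> lowest (An_fan \<delta> \<beta> n) w" "\<beta> + smul n \<delta> \<in> lowest (An_fan \<delta> \<beta> n) w"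
      using apex_in ray_in[of "int n"] by (simp_all add: argmins_def below_An_fan_iff pairing_apex)
    then show ?thesis
      using apex_ne[of "int n"] by blast
  qed
qed

lemma tie_values_iff_rays:
  "tie_values (pairing \<delta> w) (pairing \<beta> w) \<longleftrightarrow>
     (\<exists>s\<ge>0. w = s *\<^sub>R vec e2 \<or> w = s *\<^sub>R vec d2 \<or> w = s *\<^sub>R vec e1)"
proof
  have det: "det2 \<delta> \<beta> \<noteq> 0"
    using det_unit by auto
  note vals = pairing_scaleR_vec ipair_basis
  assume "tie_values (pairing \<delta> w) (pairing \<beta> w)"
  then consider "pairing \<delta> w = 0 \<and> pairing \<beta> w \<le> 0" | "0 \<le> pairing \<delta> w \<and> pairing \<beta> w = - pairing \<delta> w"
    | "pairing \<delta> w \<le> 0 \<and> pairing \<beta> w = - (of_nat n + 1) * pairing \<delta> w"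
    by (auto simp: tie_values_def)
  then show "\<exists>s\<ge>0. w = s *\<^sub>R vec e2 \<or> w = s *\<^sub>R vec d2 \<or> w = s *\<^sub>R vec e1"
  proof cases
    case 1
    then have "w = (- pairing \<beta> w) *\<^sub>R vec e2"
      by (intro eq_if_pairings_eq[OF det]) (simp_all add: vals pairing_uminus_right)
    with 1 show ?thesis
      by (intro exI[of _ "- pairing \<beta> w"]) simp
  next
    case 2
    then have "w = pairing \<delta> w *\<^sub>R vec d2"
      by (intro eq_if_pairings_eq[OF det]) (simp_all add: vals)
    with 2 show ?thesis
      by (intro exI[of _ "pairing \<delta> w"]) simp
  next
    case 3
    then have "w = (- pairing \<delta> w) *\<^sub>R vec e1"
      by (intro eq_if_pairings_eq[OF det]) (simp_all add: vals pairing_uminus_right algebra_simps)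
    with 3 show ?thesis
      by (intro exI[of _ "- pairing \<delta> w"]) simp
  qed
next
  assume "\<exists>s\<ge>0. w = s *\<^sub>R vec e2 \<or> w = s *\<^sub>R vec d2 \<or> w = s *\<^sub>R vec e1"
  then show "tie_values (pairing \<delta> w) (pairing \<beta> w)"
    by (auto simp: tie_values_def pairing_scaleR_vec ipair_basis algebra_simps)
qed

lemma edge_pair_e2:
  assumes "0 < s"
  shows "edge_pair (An_fan \<delta> \<beta> n) (s *\<^sub>R vec e2) \<beta> (\<beta> + smul n \<delta>)"
proof -
  let ?w = "s *\<^sub>R vec e2"
  have vals: "pairing \<delta> ?w = 0" "pairing \<beta> ?w = - s"
    by (simp_all add: pairing_scaleR_vec ipair_basis)
  have low: "\<beta> + smul j \<delta> \<in> lowest (An_fan \<delta> \<beta> n) ?w" if "0 \<le> j" "j \<le> int n" for j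
    using ray_in[OF that] assms vals by (simp add: argmins_def below_An_fan_iff pairing_add_smul)
  have "min (pairing \<beta> u) (pairing (\<beta> + smul n \<delta>) u) \<le> pairing t u"
    if "t \<in> lowest (An_fan \<delta> \<beta> n) ?w" for t u
  proof -
    have "t \<noteq> smul (-1) \<delta>"
    proof
      assume "t = smul (-1) \<delta>"
      then have "pairing t ?w \<le> pairing \<beta> ?w"
        using that ray_in[of 0] by (auto simp: argmins_def)
      with \<open>t = smul (-1) \<delta>\<close> vals assms show False
        by (simp add: pairing_apex)
    qed
    moreover have "t \<in> An_fan \<delta> \<beta> n"
      using that by (simp add: argmins_def)
    ultimately obtain j where j: "0 \<le> j" "j \<le> int n" "t = \<beta> + smul j \<delta>"
      by (auto simp: mem_An_fan)
    have "min 0 (of_int (int n) * pairing \<delta> u) \<le> of_int j * pairing \<delta> u"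
    proof (cases "0 \<le> pairing \<delta> u")
      case True
      then show ?thesis
        using j(1) by (simp add: min_le_iff_disj)
    next
      case False
      have "of_int (int n) * pairing \<delta> u \<le> of_int j * pairing \<delta> u"
        using j(2) False by (intro mult_right_mono_neg) auto
      then show ?thesis
        by (simp add: min_le_iff_disj)
    qed
    then show ?thesis
      by (simp add: j(3) pairing_add_smul min_add_distrib_left[symmetric])
  qed
  then show ?thesis
    using low[of 0] low[of "int n"] by (simp add: edge_pair_def)
qed

lemma edge_pair_d2:
  assumes "0 < s"
  shows "edge_pair (An_fan \<delta> \<beta> n) (s *\<^sub>R vec d2) (smul (-1) \<delta>) \<beta>"
proof -
  let ?w = "s *\<^sub>R vec d2"
  have vals: "pairing \<delta> ?w = s" "pairing \<beta> ?w = - s"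
    by (simp_all add: pairing_scaleR_vec ipair_basis)
  have below: "\<forall>t\<in>An_fan \<delta> \<beta> n. - s \<le> pairing t ?w"
    unfolding below_An_fan_iff vals using assms by auto
  have low: "smul (-1) \<delta> \<in> lowest (An_fan \<delta> \<beta> n) ?w" "\<beta> \<in> lowest (An_fan \<delta> \<beta> n) ?w"
    using below apex_in ray_in[of 0] vals by (simp_all add: argmins_def pairing_apex)
  have "t = smul (-1) \<delta> \<or> t = \<beta>" if t: "t \<in> lowest (An_fan \<delta> \<beta> n) ?w" for t
  proof -
    have le: "pairing t ?w \<le> pairing \<beta> ?w"
      using t ray_in[of 0] by (auto simp: argmins_def)
    consider "t = smul (-1) \<delta>" | j where "0 \<le> j" "j \<le> int n" "t = \<beta> + smul j \<delta>"
      using t by (auto simp: argmins_def mem_An_fan)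
    then show ?thesis
    proof cases
      case (2 j)
      with le vals assms have "j = 0"
        by (simp add: pairing_add_smul mult_le_0_iff)
      with 2 show ?thesis
        by simp
    qed simp
  qed
  then show ?thesis
    unfolding edge_pair_def using low by (metis min.cobounded1 min.cobounded2)
qed

lemma edge_pair_e1:
  assumes "0 < s"
  shows "edge_pair (An_fan \<delta> \<beta> n) (s *\<^sub>R vec e1) (smul (-1) \<delta>) (\<beta> + smul n \<delta>)"
proof -
  let ?w = "s *\<^sub>R vec e1"
  have vals: "pairing \<delta> ?w = - s" "pairing \<beta> ?w = (of_int n + 1) * s"
    by (simp_all add: pairing_scaleR_vec ipair_basis)
  have below: "\<forall>t\<in>An_fan \<delta> \<beta> n. s \<le> pairing t ?w"
    unfolding below_An_fan_iff vals using assms by (auto simp: algebra_simps mult_right_mono)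
  have low: "smul (-1) \<delta> \<in> lowest (An_fan \<delta> \<beta> n) ?w" "\<beta> + smul n \<delta> \<in> lowest (An_fan \<delta> \<beta> n) ?w"
    using below apex_in ray_in[of "int n"] vals
    by (simp_all add: argmins_def pairing_apex pairing_add_smul algebra_simps)
  have "t = smul (-1) \<delta> \<or> t = \<beta> + smul n \<delta>" if t: "t \<in> lowest (An_fan \<delta> \<beta> n) ?w" for t
  proof -
    have le: "pairing t ?w \<le> pairing (smul (-1) \<delta>) ?w"
      using t apex_in by (auto simp: argmins_def)
    consider "t = smul (-1) \<delta>" | j where "0 \<le> j" "j \<le> int n" "t = \<beta> + smul j \<delta>"
      using t by (auto simp: argmins_def mem_An_fan)
    then show ?thesis
    proof cases
      case (2 j)
      with le vals have "(of_int n - of_int j) * s \<le> 0"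
        by (simp add: pairing_add_smul pairing_apex algebra_simps)
      with assms 2 have "j = int n"
        by (simp add: mult_le_0_iff)
      with 2 show ?thesis
        by simp
    qed simp
  qed
  then show ?thesis
    unfolding edge_pair_def using low by (metis min.cobounded1 min.cobounded2)
qed

lemma diff_len_e2: "diff_len \<beta> (\<beta> + smul n \<delta>) = int n"
  and diff_len_d2: "diff_len (smul (-1) \<delta>) \<beta> = 1"
  and diff_len_e1: "diff_len (smul (-1) \<delta>) (\<beta> + smul n \<delta>) = 1"
proof -
  have "gcd (fst \<delta>) (snd \<delta>) = 1"
    using gcd_eq_1_if_det2_unit[OF det_unit] .
  then show "diff_len \<beta> (\<beta> + smul n \<delta>) = int n"
    by (simp add: diff_len_def smul_def gcd_mult_distrib_int[symmetric])
  have "\<bar>det2 (- fst \<delta> - fst \<beta>, - snd \<delta> - snd \<beta>) \<delta>\<bar> = 1"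
    using det_unit by (simp add: det2_def algebra_simps)
  from gcd_eq_1_if_det2_unit[OF this] show "diff_len (smul (-1) \<delta>) \<beta> = 1"
    by (simp add: diff_len_def smul_def)
  have "\<bar>det2 (- fst \<delta> - (fst \<beta> + int n * fst \<delta>), - snd \<delta> - (snd \<beta> + int n * snd \<delta>)) \<delta>\<bar> = 1"
    using det_unit by (simp add: det2_def algebra_simps)
  from gcd_eq_1_if_det2_unit[OF this] show "diff_len (smul (-1) \<delta>) (\<beta> + smul n \<delta>) = 1"
    by (simp add: diff_len_def smul_def)
qed

end

locale An_chart = An_frame \<delta> \<beta> n + tdist_chart \<Phi> p \<epsilon> "An_fan \<delta> \<beta> n"
  for \<delta> \<beta> n \<Phi> p \<epsilon>
begin

lemma caustic_near_vertex:
  assumes "y \<in> ball p \<epsilon>"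
  shows "y \<in> caustic \<Phi> \<longleftrightarrow> (\<exists>s\<ge>0. y = p + s *\<^sub>R vec e2 \<or> y = p + s *\<^sub>R vec d2 \<or> y = p + s *\<^sub>R vec e1)"
proof -
  have "(\<exists>l l'. l \<noteq> l' \<and> l \<in> lowest (An_fan \<delta> \<beta> n) (y - p) \<and> l' \<in> lowest (An_fan \<delta> \<beta> n) (y - p)) \<longleftrightarrow>
      tie_values (pairing \<delta> (y - p)) (pairing \<beta> (y - p))"
    (is "?tie \<longleftrightarrow> _")
  proof
    assume ?tie
    then obtain l l' where "l \<noteq> l'" "l \<in> lowest (An_fan \<delta> \<beta> n) (y - p)" "l' \<in> lowest (An_fan \<delta> \<beta> n) (y - p)"
      by blast
    then show "tie_values (pairing \<delta> (y - p)) (pairing \<beta> (y - p))"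
      by (rule tie_values_if_tie)
  qed (rule tie_if_tie_values)
  moreover have "(y - p = x) \<longleftrightarrow> (y = p + x)" for x
    by auto
  ultimately show ?thesis
    unfolding caustic_iff_tie[OF assms] tie_values_iff_rays by simp
qed

lemma edge_e2:
  assumes "0 < s" "p + s *\<^sub>R vec e2 \<in> ball p \<epsilon>"
  shows "edge_weight \<Phi> (p + s *\<^sub>R vec e2) (int n) \<and> tdist \<Phi> (p + s *\<^sub>R vec e2) < tdist \<Phi> p"
proof -
  have "\<beta> \<noteq> \<beta> + smul n \<delta>"
    using ray_ne[of 0 "int n"] n_pos by simp
  then show ?thesis
    using edge_on_ray[OF assms(2) _ edge_pair_e2[OF assms(1)]] assms(1)
    by (simp add: diff_len_e2 ipair_basis)
qed

lemma edge_d2: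
  assumes "0 < s" "p + s *\<^sub>R vec d2 \<in> ball p \<epsilon>"
  shows "edge_weight \<Phi> (p + s *\<^sub>R vec d2) 1 \<and> tdist \<Phi> (p + s *\<^sub>R vec d2) < tdist \<Phi> p"
  using edge_on_ray[OF assms(2) apex_ne[of 0, simplified] edge_pair_d2[OF assms(1)]] assms(1)
  by (simp add: diff_len_d2 ipair_smul_left ipair_basis)

lemma edge_e1:
  assumes "0 < s" "p + s *\<^sub>R vec e1 \<in> ball p \<epsilon>"
  shows "edge_weight \<Phi> (p + s *\<^sub>R vec e1) 1 \<and> tdist \<Phi> (p + s *\<^sub>R vec e1) > tdist \<Phi> p"
  using edge_on_ray[OF assms(2) apex_ne edge_pair_e1[OF assms(1)]] assms(1)
  by (simp add: diff_len_e1 ipair_smul_left ipair_basis)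


lemma local_picture:
  "\<exists>\<epsilon>>0.
     (\<forall>y\<in>ball p \<epsilon>. y \<in> caustic \<Phi> \<longleftrightarrow>
        (\<exists>s\<ge>0. y = p + s *\<^sub>R vec e2 \<or> y = p + s *\<^sub>R vec d2 \<or> y = p + s *\<^sub>R vec e1)) \<and>
     (\<forall>s>0. p + s *\<^sub>R vec e2 \<in> ball p \<epsilon> \<longrightarrow>
        edge_weight \<Phi> (p + s *\<^sub>R vec e2) (int n) \<and> tdist \<Phi> (p + s *\<^sub>R vec e2) < tdist \<Phi> p) \<and>
     (\<forall>s>0. p + s *\<^sub>R vec d2 \<in> ball p \<epsilon> \<longrightarrow>
        edge_weight \<Phi> (p + s *\<^sub>R vec d2) 1 \<and> tdist \<Phi> (p + s *\<^sub>R vec d2) < tdist \<Phi> p) \<and>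
     (\<forall>s>0. p + s *\<^sub>R vec e1 \<in> ball p \<epsilon> \<longrightarrow>
        edge_weight \<Phi> (p + s *\<^sub>R vec e1) 1 \<and> tdist \<Phi> (p + s *\<^sub>R vec e1) > tdist \<Phi> p)"
  using eps_pos caustic_near_vertex edge_e2 edge_d2 edge_e1 by blast
end

lemma sublinear_minimizers_at:
  assumes "compact \<Phi>" "p \<in> \<Phi>" "0 < tdist \<Phi> p" "tdist \<Phi> p < final_time \<Phi>"
    and finite: "finite {l. l \<noteq> (0, 0) \<and> gap \<Phi> p l = tdist \<Phi> p}"
  obtains v where "sublinear_minimizers (gap \<Phi> p) (tdist \<Phi> p) {l. l \<noteq> (0, 0) \<and> gap \<Phi> p l = tdist \<Phi> p} v"
proof -
  obtain q where q: "q \<in> \<Phi>" "tdist \<Phi> p < tdist \<Phi> q"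
    using less_cSupD[of "tdist \<Phi> ` \<Phi>" "tdist \<Phi> p"] assms(2,4) unfolding final_time_def by blast
  have "0 < pairing s (q - p)" if "s \<noteq> (0, 0)" "gap \<Phi> p s = tdist \<Phi> p" for s
  proof -
    have "tdist \<Phi> q \<le> gap \<Phi> q s"
      by (rule tdist_le_gap[OF assms(1) q(1) that(1)])
    also have "\<dots> = tdist \<Phi> p + pairing s (q - p)"
      using gap_shift[of \<Phi> q s p] that(2) by simp
    finally show ?thesis
      using q(2) by simp
  qed
  then have "sublinear_minimizers (gap \<Phi> p) (tdist \<Phi> p) {l. l \<noteq> (0, 0) \<and> gap \<Phi> p l = tdist \<Phi> p} (q - p)"
  proof unfold_locales
    show "tdist \<Phi> p \<le> gap \<Phi> p l" if "l \<noteq> (0, 0)" for l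
      by (rule tdist_le_gap[OF assms(1,2) that])
    show "gap \<Phi> p (a + b) \<le> gap \<Phi> p a + gap \<Phi> p b" for a b
      using gap_add_le[OF assms(1)] assms(2) by blast
    show "of_int k * gap \<Phi> p l \<le> gap \<Phi> p (smul k l)" if "0 \<le> k" for k l
      using gap_smul_ge[OF assms(1) _ that] assms(2) by blast
    show "gap \<Phi> p (0, 0) = 0"
      using gap_zero[OF assms(1)] assms(2) by blast
  qed (use assms(3) finite in simp_all)
  then show thesis
    using that by blast
qed

lemma An_chart_of_tdist_chart:
  assumes "tdist_chart \<Phi> p \<epsilon> (An_fan \<delta> \<beta> n)" "1 \<le> n" "\<bar>det2 \<delta> \<beta>\<bar> = 1"
  shows "An_chart \<delta> \<beta> (nat n) \<Phi> p \<epsilon>"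
proof (rule An_chart.intro)
  show "An_frame \<delta> \<beta> (nat n)"
    using assms(2,3) by unfold_locales simp_all
  show "tdist_chart \<Phi> p \<epsilon> (An_fan \<delta> \<beta> (nat n))"
    using assms(1,2) by simp
qed

theorem theorem3p1:
  fixes \<Phi> :: "(real \<times> real) set" and p :: "real \<times> real"
  assumes "compact \<Phi>" and "convex \<Phi>" and "interior \<Phi> \<noteq> {}"
    and "caustic_vertex \<Phi> p"
    and "0 < tdist \<Phi> p" and "tdist \<Phi> p < final_time \<Phi>"
  shows "\<exists>(n::nat) (e1::int \<times> int) (e2::int \<times> int). n \<ge> 1 \<and> lattice_basis e1 e2 \<and>
    (let d1 = e2;
         d2 = (- fst e1 - int n * fst e2, - snd e1 - int n * snd e2);
         d3 = e1
     in \<exists>\<epsilon>>0.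
        (\<forall>y\<in>ball p \<epsilon>. y \<in> caustic \<Phi> \<longleftrightarrow>
            (\<exists>s\<ge>0. y = p + s *\<^sub>R vec d1 \<or> y = p + s *\<^sub>R vec d2 \<or> y = p + s *\<^sub>R vec d3)) \<and>
        (\<forall>s>0. p + s *\<^sub>R vec d1 \<in> ball p \<epsilon> \<longrightarrow>
            edge_weight \<Phi> (p + s *\<^sub>R vec d1) (int n) \<and>
            tdist \<Phi> (p + s *\<^sub>R vec d1) < tdist \<Phi> p) \<and>
        (\<forall>s>0. p + s *\<^sub>R vec d2 \<in> ball p \<epsilon> \<longrightarrow>
            edge_weight \<Phi> (p + s *\<^sub>R vec d2) 1 \<and>
            tdist \<Phi> (p + s *\<^sub>R vec d2) < tdist \<Phi> p) \<and>
        (\<forall>s>0. p + s *\<^sub>R vec d3 \<in> ball p \<epsilon> \<longrightarrow>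
            edge_weight \<Phi> (p + s *\<^sub>R vec d3) 1 \<and>
            tdist \<Phi> (p + s *\<^sub>R vec d3) > tdist \<Phi> p))"
proof -
  have p: "p \<in> caustic \<Phi>"
    using assms(4) by (simp add: caustic_vertex_def)
  then have "p \<in> interior \<Phi>" and "p \<in> \<Phi>"
    using interior_subset by (auto simp: caustic_def)
  define S where "S = {l. l \<noteq> (0, 0) \<and> gap \<Phi> p l = tdist \<Phi> p}"
  obtain \<epsilon> where chart: "tdist_chart \<Phi> p \<epsilon> S"
    using tdist_chart_at_interior_point[OF assms(1) \<open>p \<in> interior \<Phi>\<close>] unfolding S_def .
  obtain l1 l2 where "l1 \<noteq> l2" "attains \<Phi> p l1" "attains \<Phi> p l2"
    using p unfolding caustic_def by blast
  then have "l1 \<in> S" "l2 \<in> S"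
    by (simp_all add: S_def attains_iff_gap)
  obtain v where "sublinear_minimizers (gap \<Phi> p) (tdist \<Phi> p) S v"
    using sublinear_minimizers_at[OF assms(1) \<open>p \<in> \<Phi>\<close> assms(5,6)] tdist_chart.finite_S[OF chart]
    unfolding S_def by blast
  then obtain \<delta> \<beta> n where n: "1 \<le> n" "\<bar>det2 \<delta> \<beta>\<bar> = 1" "S = An_fan \<delta> \<beta> n"
    using sublinear_minimizers.segment_or_An_fan[OF _ \<open>l1 \<in> S\<close> \<open>l2 \<in> S\<close> \<open>l1 \<noteq> l2\<close>]
      tdist_chart.not_vertex_if_segment[OF chart] assms(4) by blast
  with chart have fan: "An_chart \<delta> \<beta> (nat n) \<Phi> p \<epsilon>"
    by (intro An_chart_of_tdist_chart) simp_all
  then have frame: "An_frame \<delta> \<beta> (nat n)"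
    by (rule An_chart.axioms(1))
  show ?thesis
    unfolding Let_def
  proof (rule exI[of _ "nat n"], rule exI[of _ "An_frame.e1 \<delta> \<beta> (nat n)"], rule exI[of _ "An_frame.e2 \<delta> \<beta>"],
      intro conjI)
  qed (use n(1) An_frame.lattice_basis_e1_e2[OF frame]
      An_chart.local_picture[OF fan] in simp_all)
qed

end
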